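(* Let $X$ be a vector field on $\mathbb{S}^1$. Then: (1) if $X$ is continuous, then $\mathcal{E}_X^+$ and $\mathcal{E}_X^-$ extend continuously to $X$; (2) if $X$ is lower semicontinuous, then $\mathcal{E}_X^-$ extends radially to $X$; (3) if $X$ is upper semicontinuous, then $\mathcal{E}_X^+$ extends radially to $X$.
   Context: $\mathbb{R}^{1,2}$ is $\mathbb{R}^3$ with $\langle x,y\rangle=-x_0y_0+x_1y_1+x_2y_2$; $\Pi(x_0,x_1,x_2)=(x_1/x_0,x_2/x_0)$ identifies $\mathbb{H}^2$ with the Klein disk $\mathbb{D}^2$, boundary $\mathbb{S}^1$. The Minkowski cross product satisfies $\langle x\boxtimes y,v\rangle=\det(x,y,v)$ for all $v$. A vector field $X$ on $\mathbb{S}^1$ is written $X(z)=iz\phi_X(z)$, $\phi_X:\mathbb{S}^1\to\mathbb{R}$; $X$ is lower/upper semicontinuous if $\phi_X$ is. For $\eta\in\overline{\mathbb{D}^2}$, $\phi_X^-(\eta)=\sup\{a(\eta):a\text{ affine on }\mathbb{R}^2,a|_{\mathbb{S}^1}\le\phi_X\}$ and $\phi_X^+(\eta)=\inf\{a(\eta):a\text{ affine},a|_{\mathbb{S}^1}\ge\phi_X\}$. For $\eta\in\mathbb{D}^2$ let $\Sigma^-(\eta)$ be the set of $\sigma\in\mathbb{R}^{1,2}$ with $\langle(1,\xi),\sigma\rangle\le\phi_X^-(\xi)$ for all $\xi\in\mathbb{D}^2$ and equality at $\xi=\eta$ (i.e. the plane $t=\langle(1,\xi),\sigma\rangle$ in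 $\mathbb{D}^2\times\mathbb{R}$ is a support plane of the epigraph of $\phi_X^-$ at $(\eta,\phi_X^-(\eta))$), and $\Sigma^+(\eta)$ the analogous set with $\ge\phi_X^+$. (For $X$ lower, resp. upper, semicontinuous, $\Sigma^-(\eta)$, resp. $\Sigma^+(\eta)$, is always a single point or a compact segment.) Define $\mathcal{E}_X^\pm(\eta)=\mathrm{d}_{(1,\eta)}\Pi((1,\eta)\boxtimes\sigma^\pm(\eta))$, where $\sigma^\pm(\eta)$ is the unique element of $\Sigma^\pm(\eta)$ if it is a point and the midpoint of $\Sigma^\pm(\eta)$ if it is a segment. A vector field $\hat X$ on $\mathbb{D}^2$ extends continuously to $X$ if $\hat X(\eta_n)\to X(z)$ whenever $\eta_n\in\mathbb{D}^2$, $\eta_n\to z\in\mathbb{S}^1$; it extends radially to $X$ if $\lim_{s\to0^+}\hat X((1-s)z+sx)=X(z)$ for all $z\in\mathbb{S}^1$, $x\in\mathbb{D}^2$. *)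

theory Defs
  imports "HOL-Analysis.Analysis"
begin

(* The unit circle S^1 and the open (Klein) disk D^2 are modelled in the complex plane:
   S^1 = sphere 0 1, D^2 = ball 0 1. Minkowski space R^{1,2} is real^3 with coordinates
   x$1 = x_0, x$2 = x_1, x$3 = x_2. *)

definition mink :: "real^3 \<Rightarrow> real^3 \<Rightarrow> real" where
  "mink x y = - x$1 * y$1 + x$2 * y$2 + x$3 * y$3"

definition mcross :: "real^3 \<Rightarrow> real^3 \<Rightarrow> real^3" where
  "mcross x y = (THE w. \<forall>v. mink w v = det (vector [x, y, v] :: real^3^3))"

definition lift :: "complex \<Rightarrow> real^3" where
  "lift \<eta> = vector [1, Re \<eta>, Im \<eta>]"

definition Pi_proj :: "real^3 \<Rightarrow> complex" where
  "Pi_proj x = Complex (x$2 / x$1) (x$3 / x$1)"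

(* a vector field on S^1 is tangent: X z = i z phi_X z with phi_X real *)
definition tangent_field :: "(complex \<Rightarrow> complex) \<Rightarrow> bool" where
  "tangent_field X \<longleftrightarrow> (\<forall>z\<in>sphere 0 1. X z / (\<i> * z) \<in> \<real>)"

definition phiX :: "(complex \<Rightarrow> complex) \<Rightarrow> complex \<Rightarrow> real" where
  "phiX X z = Re (X z / (\<i> * z))"

definition lsc_on :: "complex set \<Rightarrow> (complex \<Rightarrow> real) \<Rightarrow> bool" where
  "lsc_on S f \<longleftrightarrow> (\<forall>a. openin (top_of_set S) {z\<in>S. a < f z})"

definition usc_on :: "complex set \<Rightarrow> (complex \<Rightarrow> real) \<Rightarrow> bool" where
  "usc_on S f \<longleftrightarrow> (\<forall>a. openin (top_of_set S) {z\<in>S. f z < a})"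

definition phi_minus :: "(complex \<Rightarrow> complex) \<Rightarrow> complex \<Rightarrow> real" where
  "phi_minus X \<eta> = Sup {c + b1 * Re \<eta> + b2 * Im \<eta> | c b1 b2.
      \<forall>z\<in>sphere 0 1. c + b1 * Re z + b2 * Im z \<le> phiX X z}"

definition phi_plus :: "(complex \<Rightarrow> complex) \<Rightarrow> complex \<Rightarrow> real" where
  "phi_plus X \<eta> = Inf {c + b1 * Re \<eta> + b2 * Im \<eta> | c b1 b2.
      \<forall>z\<in>sphere 0 1. c + b1 * Re z + b2 * Im z \<ge> phiX X z}"

definition Sigma_minus :: "(complex \<Rightarrow> complex) \<Rightarrow> complex \<Rightarrow> (real^3) set" where
  "Sigma_minus X \<eta> = {\<sigma>. (\<forall>\<xi>\<in>ball 0 1. mink (lift \<xi>) \<sigma> \<le> phi_minus X \<xi>)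
      \<and> mink (lift \<eta>) \<sigma> = phi_minus X \<eta>}"

definition Sigma_plus :: "(complex \<Rightarrow> complex) \<Rightarrow> complex \<Rightarrow> (real^3) set" where
  "Sigma_plus X \<eta> = {\<sigma>. (\<forall>\<xi>\<in>ball 0 1. mink (lift \<xi>) \<sigma> \<ge> phi_plus X \<xi>)
      \<and> mink (lift \<eta>) \<sigma> = phi_plus X \<eta>}"

(* the unique point if Sigma is a point (closed_segment p p = {p}), the midpoint if a segment *)
definition sel_mid :: "(real^3) set \<Rightarrow> real^3" where
  "sel_mid S = (THE m. \<exists>p q. S = closed_segment p q \<and> m = midpoint p q)"

definition E_minus :: "(complex \<Rightarrow> complex) \<Rightarrow> complex \<Rightarrow> complex" where
  "E_minus X \<eta> = frechet_derivative Pi_proj (at (lift \<eta>))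
                    (mcross (lift \<eta>) (sel_mid (Sigma_minus X \<eta>)))"

definition E_plus :: "(complex \<Rightarrow> complex) \<Rightarrow> complex \<Rightarrow> complex" where
  "E_plus X \<eta> = frechet_derivative Pi_proj (at (lift \<eta>))
                    (mcross (lift \<eta>) (sel_mid (Sigma_plus X \<eta>)))"

definition extends_continuously :: "(complex \<Rightarrow> complex) \<Rightarrow> (complex \<Rightarrow> complex) \<Rightarrow> bool" where
  "extends_continuously Xh X \<longleftrightarrow>
     (\<forall>z\<in>sphere 0 1. \<forall>\<eta>. (\<forall>n. \<eta> n \<in> ball 0 1) \<and> \<eta> \<longlonglongrightarrow> z
        \<longrightarrow> (\<lambda>n. Xh (\<eta> n)) \<longlonglongrightarrow> X z)"

definition extends_radially :: "(complex \<Rightarrow> complex) \<Rightarrow> (complex \<Rightarrow> complex) \<Rightarrow> bool" where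
  "extends_radially Xh X \<longleftrightarrow>
     (\<forall>z\<in>sphere 0 1. \<forall>x\<in>ball 0 1.
        ((\<lambda>s::real. Xh ((1 - of_real s) * z + of_real s * x)) \<longlongrightarrow> X z) (at_right 0))"

end

theory Submission
  imports Defs
begin

(* Write \<phi> = phiX X. The function phi_minus is the lower convex envelope of \<phi>, the supremum of the
   affine functions lying below \<phi> on the circle, and E_minus at \<eta> is
   i (\<eta> phi_minus(\<eta>) + (1 - |\<eta>|^2) grad \<sigma>) for a support plane \<sigma> of the envelope at \<eta>.
   At an interior point the support planes form a segment: if three of them had affinely independent
   gradients, their average raised by a small constant would still lie below \<phi> on the circle.
   As \<eta> tends to z on the circle, phi_minus(\<eta>) tends to \<phi>(z): from below because lower
   semicontinuity at z yields affine minorants close to \<phi>(z) near z, from above by upper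
   semicontinuity or, along a radius, by convexity. Since \<sigma> lies below the envelope at the four
   points at distance \<rho> ~ 1 - |\<eta>| from \<eta> along the axes, \<rho> |grad \<sigma>| is bounded by the
   increase of the envelope there, which tends to zero; so the tangential term vanishes in the limit
   and E_minus tends to i z \<phi>(z) = X z. E_plus of X is minus E_minus of -X. *)

definition affine_of :: "real^3 \<Rightarrow> complex \<Rightarrow> real" where
  "affine_of \<sigma> \<xi> = - \<sigma>$1 + \<sigma>$2 * Re \<xi> + \<sigma>$3 * Im \<xi>"

lemma mink_lift: "mink (lift \<xi>) \<sigma> = affine_of \<sigma> \<xi>"
  by (simp add: mink_def lift_def affine_of_def)

lemma affine_of_add: "affine_of (\<sigma> + \<tau>) \<xi> = affine_of \<sigma> \<xi> + affine_of \<tau> \<xi>"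
  and affine_of_uminus: "affine_of (- \<sigma>) \<xi> = - affine_of \<sigma> \<xi>"
  by (simp_all add: affine_of_def algebra_simps)

lemma affine_of_convex_combination:
  "affine_of \<sigma> ((1 - t) *\<^sub>R p + t *\<^sub>R q) = (1 - t) * affine_of \<sigma> p + t * affine_of \<sigma> q"
  by (simp add: affine_of_def algebra_simps)

lemma continuous_on_affine_of: "continuous_on S (\<lambda>\<sigma>. affine_of \<sigma> \<xi>)"
  unfolding affine_of_def by (intro continuous_intros)

lemma affine_of_le_antipodal_max:
  assumes "cmod \<xi> \<le> 1"
  obtains w where "w \<in> sphere 0 1" "\<And>\<sigma>. affine_of \<sigma> \<xi> \<le> max (affine_of \<sigma> w) (affine_of \<sigma> (- w))"
proof
  define w where "w = (if \<xi> = 0 then 1 else sgn \<xi>)"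
  define t where "t = (1 - cmod \<xi>) / 2"
  show "w \<in> sphere 0 1" by (simp add: w_def norm_sgn)
  fix \<sigma>
  have "\<xi> = (1 - t) *\<^sub>R w + t *\<^sub>R (- w)"
    by (simp add: w_def t_def scaleR_conv_of_real sgn_eq field_simps)
  then have "affine_of \<sigma> \<xi> = (1 - t) * affine_of \<sigma> w + t * affine_of \<sigma> (- w)"
    by (simp only: affine_of_convex_combination)
  also have "\<dots> \<le> max (affine_of \<sigma> w) (affine_of \<sigma> (- w))"
  proof (rule convex_bound_le)
    show "0 \<le> t" using assms unfolding t_def by simp
    show "0 \<le> 1 - t" unfolding t_def using norm_ge_zero[of \<xi>] by (simp add: field_simps)
  qed auto
  finally show "affine_of \<sigma> \<xi> \<le> max (affine_of \<sigma> w) (affine_of \<sigma> (- w))" .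
qed

definition minorant :: "(complex \<Rightarrow> real) \<Rightarrow> real^3 \<Rightarrow> bool" where
  "minorant \<phi> \<sigma> \<longleftrightarrow> (\<forall>z\<in>sphere 0 1. affine_of \<sigma> z \<le> \<phi> z)"

definition lower_envelope :: "(complex \<Rightarrow> real) \<Rightarrow> complex \<Rightarrow> real" where
  "lower_envelope \<phi> \<eta> = (SUP \<sigma>\<in>Collect (minorant \<phi>). affine_of \<sigma> \<eta>)"

lemma affine_values_eq_image:
  "{c + b1 * Re \<eta> + b2 * Im \<eta> | c b1 b2. P (\<lambda>\<xi>. c + b1 * Re \<xi> + b2 * Im \<xi>)}
     = (\<lambda>\<sigma>. affine_of \<sigma> \<eta>) ` {\<sigma>. P (affine_of \<sigma>)}"
proof (intro set_eqI iffI)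
  fix y assume "y \<in> {c + b1 * Re \<eta> + b2 * Im \<eta> | c b1 b2. P (\<lambda>\<xi>. c + b1 * Re \<xi> + b2 * Im \<xi>)}"
  then obtain c b1 b2 where "y = c + b1 * Re \<eta> + b2 * Im \<eta>" "P (\<lambda>\<xi>. c + b1 * Re \<xi> + b2 * Im \<xi>)"
    by blast
  moreover have "affine_of (vector [- c, b1, b2]) = (\<lambda>\<xi>. c + b1 * Re \<xi> + b2 * Im \<xi>)"
    by (simp add: fun_eq_iff affine_of_def)
  ultimately show "y \<in> (\<lambda>\<sigma>. affine_of \<sigma> \<eta>) ` {\<sigma>. P (affine_of \<sigma>)}"
    by (metis (mono_tags, lifting) image_eqI mem_Collect_eq)
next
  fix y assume "y \<in> (\<lambda>\<sigma>. affine_of \<sigma> \<eta>) ` {\<sigma>. P (affine_of \<sigma>)}"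
  then obtain \<sigma> where "y = affine_of \<sigma> \<eta>" "P (affine_of \<sigma>)" by blast
  then show "y \<in> {c + b1 * Re \<eta> + b2 * Im \<eta> | c b1 b2. P (\<lambda>\<xi>. c + b1 * Re \<xi> + b2 * Im \<xi>)}"
    unfolding affine_of_def by blast
qed

lemma phi_minus_eq_lower_envelope: "phi_minus X = lower_envelope (phiX X)"
  unfolding fun_eq_iff phi_minus_def lower_envelope_def minorant_def
  using affine_values_eq_image[where P = "\<lambda>f. \<forall>z\<in>sphere 0 1. f z \<le> phiX X z"] by simp

lemma phi_plus_eq_lower_envelope: "phi_plus X \<eta> = - lower_envelope (\<lambda>z. - phiX X z) \<eta>"
proof -
  let ?M = "{\<sigma>. \<forall>z\<in>sphere 0 1. phiX X z \<le> affine_of \<sigma> z}"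
  have M: "?M = uminus ` Collect (minorant (\<lambda>z. - phiX X z))"
    by (force simp: minorant_def affine_of_uminus image_iff intro: exI[of _ "- _"])
  have "phi_plus X \<eta> = Inf ((\<lambda>\<sigma>. affine_of \<sigma> \<eta>) ` ?M)"
    unfolding phi_plus_def
    using affine_values_eq_image[where P = "\<lambda>f. \<forall>z\<in>sphere 0 1. phiX X z \<le> f z"] by simp
  also have "\<dots> = - lower_envelope (\<lambda>z. - phiX X z) \<eta>"
    unfolding Inf_real_def M lower_envelope_def image_image affine_of_uminus by simp
  finally show ?thesis .
qed

lemma bdd_above_minorant_values:
  assumes "cmod \<xi> \<le> 1"
  shows "bdd_above ((\<lambda>\<sigma>. affine_of \<sigma> \<xi>) ` Collect (minorant \<phi>))"
proof -
  obtain w where w: "w \<in> sphere 0 1"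
    and le: "\<And>\<sigma>. affine_of \<sigma> \<xi> \<le> max (affine_of \<sigma> w) (affine_of \<sigma> (- w))"
    using affine_of_le_antipodal_max[OF assms] by blast
  have "affine_of \<sigma> \<xi> \<le> max (\<phi> w) (\<phi> (- w))" if "minorant \<phi> \<sigma>" for \<sigma>
    using le[of \<sigma>] that w by (force simp: minorant_def intro: order.trans[OF _ max.mono])
  then show ?thesis by (intro bdd_aboveI2) simp
qed

lemma minorant_le_lower_envelope:
  assumes "minorant \<phi> \<sigma>" "cmod \<xi> \<le> 1"
  shows "affine_of \<sigma> \<xi> \<le> lower_envelope \<phi> \<xi>"
  unfolding lower_envelope_def
  by (rule cSUP_upper[OF _ bdd_above_minorant_values[OF assms(2)]]) (use assms(1) in simp)

lemma exists_minorant: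
  assumes "bdd_below (\<phi> ` sphere 0 1)"
  shows "\<exists>\<sigma>. minorant \<phi> \<sigma>"
proof -
  obtain m where "\<forall>z\<in>sphere 0 1. m \<le> \<phi> z"
    using assms by (auto simp: bdd_below_def)
  then have "minorant \<phi> (vector [- m, 0, 0])" by (simp add: minorant_def affine_of_def)
  then show ?thesis ..
qed

lemma lower_envelope_le:
  assumes "bdd_below (\<phi> ` sphere 0 1)" "\<And>\<sigma>. minorant \<phi> \<sigma> \<Longrightarrow> affine_of \<sigma> \<xi> \<le> B"
  shows "lower_envelope \<phi> \<xi> \<le> B"
  unfolding lower_envelope_def using exists_minorant[OF assms(1)] assms(2)
  by (intro cSUP_least) auto

lemma lower_envelope_le_phi:
  assumes "bdd_below (\<phi> ` sphere 0 1)" "z \<in> sphere 0 1"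
  shows "lower_envelope \<phi> z \<le> \<phi> z"
  using assms by (intro lower_envelope_le) (auto simp: minorant_def)

lemma convex_on_lower_envelope:
  assumes "bdd_below (\<phi> ` sphere 0 1)"
  shows "convex_on (cball 0 1) (lower_envelope \<phi>)"
proof (rule convex_onI[OF _ convex_cball])
  fix t :: real and x y :: complex
  assume t: "0 < t" "t < 1" and xy: "x \<in> cball 0 1" "y \<in> cball 0 1"
  show "lower_envelope \<phi> ((1 - t) *\<^sub>R x + t *\<^sub>R y) \<le> (1 - t) * lower_envelope \<phi> x + t * lower_envelope \<phi> y"
  proof (rule lower_envelope_le[OF assms])
    fix \<sigma> assume "minorant \<phi> \<sigma>"
    then have "affine_of \<sigma> x \<le> lower_envelope \<phi> x" "affine_of \<sigma> y \<le> lower_envelope \<phi> y"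
      using xy by (auto intro: minorant_le_lower_envelope)
    then show "affine_of \<sigma> ((1 - t) *\<^sub>R x + t *\<^sub>R y) \<le> (1 - t) * lower_envelope \<phi> x + t * lower_envelope \<phi> y"
      unfolding affine_of_convex_combination using t
      by (intro add_mono mult_left_mono) auto
  qed
qed

lemma lower_envelope_le_along_ray:
  assumes "bdd_below (\<phi> ` sphere 0 1)" "z \<in> sphere 0 1" "cmod q \<le> 1" "0 \<le> s" "s \<le> 1"
  shows "lower_envelope \<phi> ((1 - s) *\<^sub>R z + s *\<^sub>R q) \<le> (1 - s) * \<phi> z + s * lower_envelope \<phi> q"
proof -
  have "lower_envelope \<phi> ((1 - s) *\<^sub>R z + s *\<^sub>R q) \<le> (1 - s) * lower_envelope \<phi> z + s * lower_envelope \<phi> q"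
    using convex_onD[OF convex_on_lower_envelope[OF assms(1)]] assms(2-5) by simp
  also have "\<dots> \<le> (1 - s) * \<phi> z + s * lower_envelope \<phi> q"
    using lower_envelope_le_phi[OF assms(1,2)] assms(5) by (simp add: mult_left_mono)
  finally show ?thesis .
qed

lemma lsc_onD:
  assumes "lsc_on S \<phi>" "z \<in> S" "e > 0"
  obtains \<delta> where "\<delta> > 0" "\<And>w. w \<in> S \<Longrightarrow> dist w z < \<delta> \<Longrightarrow> \<phi> z - e < \<phi> w"
proof -
  have "openin (top_of_set S) {w \<in> S. \<phi> z - e < \<phi> w}" "z \<in> {w \<in> S. \<phi> z - e < \<phi> w}"
    using assms by (auto simp: lsc_on_def)
  then have "\<exists>\<delta>>0. \<forall>w\<in>S. dist w z < \<delta> \<longrightarrow> w \<in> {w \<in> S. \<phi> z - e < \<phi> w}"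
    unfolding openin_euclidean_subtopology_iff by blast
  then show ?thesis using that by auto
qed

lemma lsc_on_imp_bdd_below:
  assumes "compact S" "lsc_on S \<phi>"
  shows "bdd_below (\<phi> ` S)"
proof -
  have "\<exists>T. open T \<and> {z \<in> S. - real n < \<phi> z} = S \<inter> T" for n
    using assms(2) by (simp add: lsc_on_def openin_open)
  then obtain T where T: "\<And>n. open (T n)" "\<And>n. {z \<in> S. - real n < \<phi> z} = S \<inter> T n"
    by metis
  have cover: "S \<subseteq> (\<Union>n\<in>UNIV. T n)"
  proof
    fix z assume "z \<in> S"
    moreover obtain n where "- \<phi> z < real n" using reals_Archimedean2 by blast
    ultimately show "z \<in> (\<Union>n\<in>UNIV. T n)" using T(2)[of n] by auto
  qed
  have "\<exists>C. finite C \<and> S \<subseteq> (\<Union>n\<in>C. T n)"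
    by (rule compactE_image[OF assms(1), of UNIV T]) (use T(1) cover in auto)
  then obtain C where C: "finite C" "S \<subseteq> (\<Union>n\<in>C. T n)" by blast
  have "- real (Max (insert 0 C)) \<le> \<phi> z" if z: "z \<in> S" for z
  proof -
    obtain n where "n \<in> C" "z \<in> T n" using C(2) z by blast
    then have "- real n < \<phi> z" "n \<le> Max (insert 0 C)" using T(2)[of n] z C(1) by auto
    then show ?thesis by linarith
  qed
  then show ?thesis by (intro bdd_belowI2)
qed

lemma usc_on_iff_lsc_on_uminus: "usc_on S \<phi> \<longleftrightarrow> lsc_on S (\<lambda>z. - \<phi> z)"
  unfolding lsc_on_def usc_on_def
proof (intro iffI allI)
  fix a assume usc: "\<forall>a. openin (top_of_set S) {z \<in> S. \<phi> z < a}"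
  have "{z \<in> S. a < - \<phi> z} = {z \<in> S. \<phi> z < - a}" by auto
  with usc show "openin (top_of_set S) {z \<in> S. a < - \<phi> z}" by (simp only:)
next
  fix a assume lsc: "\<forall>a. openin (top_of_set S) {z \<in> S. a < - \<phi> z}"
  have "{z \<in> S. \<phi> z < a} = {z \<in> S. - a < - \<phi> z}" by auto
  with lsc show "openin (top_of_set S) {z \<in> S. \<phi> z < a}" by (simp only:)
qed

lemma continuous_on_imp_lsc_on:
  assumes "continuous_on S \<phi>"
  shows "lsc_on S \<phi>"
proof -
  have "openin (top_of_set S) (S \<inter> \<phi> -` {a<..})" for a
    by (rule continuous_openin_preimage_gen[OF assms]) simp
  moreover have "S \<inter> \<phi> -` {a<..} = {z \<in> S. a < \<phi> z}" for a by auto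
  ultimately show ?thesis by (simp add: lsc_on_def)
qed

lemma sphere_chord_eq:
  assumes "z \<in> sphere 0 1" "w \<in> sphere 0 1"
  shows "1 - Re (cnj z * w) = (cmod (w - z))\<^sup>2 / 2"
proof -
  have "(Re z)\<^sup>2 + (Im z)\<^sup>2 = 1" "(Re w)\<^sup>2 + (Im w)\<^sup>2 = 1"
    using assms by (simp_all flip: cmod_power2)
  moreover have "(cmod (w - z))\<^sup>2 = (Re w - Re z)\<^sup>2 + (Im w - Im z)\<^sup>2"
    by (simp add: cmod_power2)
  ultimately show ?thesis by (simp add: power2_eq_square algebra_simps)
qed

lemma one_minus_Re_cnj_mult_le:
  assumes "z \<in> sphere 0 1"
  shows "1 - Re (cnj z * \<xi>) \<le> cmod (\<xi> - z)"
proof -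
  have "1 - Re (cnj z * \<xi>) = Re (cnj z * (z - \<xi>))"
    using assms by (simp add: algebra_simps complex_norm_square[symmetric])
  also have "\<dots> \<le> cmod (z - \<xi>)"
    using complex_Re_le_cmod[of "cnj z * (z - \<xi>)"] assms by (simp add: norm_mult)
  finally show ?thesis by (simp add: norm_minus_commute)
qed

lemma lsc_on_minorant_near:
  assumes lsc: "lsc_on (sphere 0 1) \<phi>" and z: "z \<in> sphere 0 1" and e: "e > 0"
  obtains \<sigma> \<delta> where "minorant \<phi> \<sigma>" "\<delta> > 0"
    "\<And>\<xi>. cmod (\<xi> - z) < \<delta> \<Longrightarrow> \<phi> z - e \<le> affine_of \<sigma> \<xi>"
proof -
  obtain \<delta>0 where \<delta>0: "\<delta>0 > 0" "\<And>w. w \<in> sphere 0 1 \<Longrightarrow> dist w z < \<delta>0 \<Longrightarrow> \<phi> z - e / 2 < \<phi> w"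
    using lsc_onD[OF lsc z, of "e / 2"] e by auto
  obtain m where m: "\<forall>w\<in>sphere 0 1. m \<le> \<phi> w"
    using lsc_on_imp_bdd_below[OF compact_sphere lsc] by (auto simp: bdd_below_def)
  define M where "M = max 0 (2 * (\<phi> z - m) / \<delta>0\<^sup>2)"
  have M: "M \<ge> 0" "\<phi> z - m \<le> M * \<delta>0\<^sup>2 / 2"
    using \<delta>0(1) by (auto simp: M_def field_simps max_def)
  \<comment> \<open>on the circle this plane is \<open>\<phi> z - e/2 - M |w - z|\<^sup>2 / 2\<close>, by \<open>sphere_chord_eq\<close>\<close>
  define \<sigma> :: "real^3" where "\<sigma> = vector [M - \<phi> z + e / 2, M * Re z, M * Im z]"
  have \<sigma>: "affine_of \<sigma> \<xi> = \<phi> z - e / 2 - M * (1 - Re (cnj z * \<xi>))" for \<xi>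
    by (simp add: \<sigma>_def affine_of_def algebra_simps)
  have "minorant \<phi> \<sigma>"
    unfolding minorant_def
  proof
    fix w :: complex assume w: "w \<in> sphere 0 1"
    have val: "affine_of \<sigma> w = \<phi> z - e / 2 - M * (cmod (w - z))\<^sup>2 / 2"
      using sphere_chord_eq[OF z w] by (simp add: \<sigma>)
    show "affine_of \<sigma> w \<le> \<phi> w"
    proof (cases "cmod (w - z) < \<delta>0")
      case True
      moreover have "0 \<le> M * (cmod (w - z))\<^sup>2 / 2" using M(1) by simp
      ultimately show ?thesis using \<delta>0(2)[OF w] val by (simp add: dist_norm)
    next
      case False
      then have "M * \<delta>0\<^sup>2 \<le> M * (cmod (w - z))\<^sup>2"
        using \<delta>0(1) M(1) by (intro mult_left_mono power_mono) auto
      moreover have "m \<le> \<phi> w" using m w by blast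
      ultimately show ?thesis using val M(2) e by linarith
    qed
  qed
  moreover have "\<phi> z - e \<le> affine_of \<sigma> \<xi>" if "cmod (\<xi> - z) < e / (2 * (M + 1))" for \<xi>
  proof -
    have "1 - Re (cnj z * \<xi>) \<le> e / (2 * (M + 1))"
      using one_minus_Re_cnj_mult_le[OF z, of \<xi>] that by linarith
    then have "M * (1 - Re (cnj z * \<xi>)) \<le> M * (e / (2 * (M + 1)))"
      using M(1) by (rule mult_left_mono)
    also have "\<dots> \<le> e / 2" using M(1) e by (simp add: field_simps)
    finally show ?thesis by (simp add: \<sigma>)
  qed
  moreover have "e / (2 * (M + 1)) > 0" using M(1) e by simp
  ultimately show ?thesis using that by blast
qed

lemma lower_envelope_ge_near:
  assumes "lsc_on (sphere 0 1) \<phi>" "z \<in> sphere 0 1" "e > 0"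
  obtains \<delta> where "\<delta> > 0"
    "\<And>\<xi>. cmod \<xi> \<le> 1 \<Longrightarrow> cmod (\<xi> - z) < \<delta> \<Longrightarrow> \<phi> z - e \<le> lower_envelope \<phi> \<xi>"
proof -
  obtain \<sigma> \<delta> where \<sigma>: "minorant \<phi> \<sigma>" "\<delta> > 0"
    "\<And>\<xi>. cmod (\<xi> - z) < \<delta> \<Longrightarrow> \<phi> z - e \<le> affine_of \<sigma> \<xi>"
    using lsc_on_minorant_near[OF assms] by blast
  show ?thesis
  proof (rule that[OF \<sigma>(2)])
    fix \<xi> assume "cmod \<xi> \<le> 1" "cmod (\<xi> - z) < \<delta>"
    then show "\<phi> z - e \<le> lower_envelope \<phi> \<xi>"
      using \<sigma>(3) minorant_le_lower_envelope[OF \<sigma>(1)] by (meson order_trans)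
  qed
qed

lemma lower_envelope_le_near:
  assumes "lsc_on (sphere 0 1) \<phi>" "usc_on (sphere 0 1) \<phi>" "z \<in> sphere 0 1" "e > 0"
  obtains \<delta> where "\<delta> > 0"
    "\<And>\<xi>. cmod \<xi> \<le> 1 \<Longrightarrow> cmod (\<xi> - z) < \<delta> \<Longrightarrow> lower_envelope \<phi> \<xi> \<le> \<phi> z + e"
proof -
  obtain \<tau> \<delta> where \<tau>: "minorant (\<lambda>w. - \<phi> w) \<tau>" "\<delta> > 0"
    "\<And>\<xi>. cmod (\<xi> - z) < \<delta> \<Longrightarrow> - \<phi> z - e \<le> affine_of \<tau> \<xi>"
    using lsc_on_minorant_near[OF assms(2)[unfolded usc_on_iff_lsc_on_uminus] assms(3,4)] by blast
  have "lower_envelope \<phi> \<xi> \<le> \<phi> z + e" if \<xi>: "cmod \<xi> \<le> 1" "cmod (\<xi> - z) < \<delta>" for \<xi>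
  proof (rule lower_envelope_le)
    show "bdd_below (\<phi> ` sphere 0 1)" by (rule lsc_on_imp_bdd_below[OF compact_sphere assms(1)])
    fix \<sigma> assume \<sigma>: "minorant \<phi> \<sigma>"
    \<comment> \<open>\<open>- \<tau>\<close> is an affine majorant of \<open>\<phi>\<close>; the affine \<open>\<sigma> + \<tau>\<close> is \<open>\<le> 0\<close> on the circle, hence on the disk\<close>
    have nonpos: "affine_of (\<sigma> + \<tau>) w \<le> 0" if "w \<in> sphere 0 1" for w
    proof -
      have "affine_of \<sigma> w \<le> \<phi> w" "affine_of \<tau> w \<le> - \<phi> w"
        using \<sigma> \<tau>(1) that unfolding minorant_def by blast+
      then show ?thesis by (simp add: affine_of_add)
    qed
    obtain w where w: "w \<in> sphere 0 1"
      and wmax: "\<And>\<sigma>. affine_of \<sigma> \<xi> \<le> max (affine_of \<sigma> w) (affine_of \<sigma> (- w))"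
      using affine_of_le_antipodal_max[OF \<xi>(1)] by blast
    have "- w \<in> sphere 0 1" using w by simp
    then have "affine_of (\<sigma> + \<tau>) \<xi> \<le> 0"
      using wmax[of "\<sigma> + \<tau>"] nonpos[OF w] nonpos[of "- w"] by simp
    then show "affine_of \<sigma> \<xi> \<le> \<phi> z + e" using \<tau>(3)[OF \<xi>(2)] by (simp add: affine_of_add)
  qed
  with \<tau>(2) show ?thesis using that by blast
qed

lemma affine_of_eq_inner: "affine_of \<sigma> \<xi> = inner (vector [-1, Re \<xi>, Im \<xi>]) \<sigma>"
  by (simp add: affine_of_def inner_vec_def sum_3)

lemma minorants_eq_Inter_halfspaces:
  "Collect (minorant \<phi>) = (\<Inter>z\<in>sphere 0 1. {\<sigma>. inner (vector [-1, Re z, Im z]) \<sigma> \<le> \<phi> z})"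
  by (auto simp: minorant_def affine_of_eq_inner)

lemma closed_minorants: "closed (Collect (minorant \<phi>))"
  unfolding minorants_eq_Inter_halfspaces by (intro closed_INT ballI closed_halfspace_le)

lemma convex_minorants: "convex (Collect (minorant \<phi>))"
  unfolding minorants_eq_Inter_halfspaces by (intro convex_INT ballI convex_halfspace_le)

definition support_set :: "(complex \<Rightarrow> real) \<Rightarrow> complex \<Rightarrow> (real^3) set" where
  "support_set \<phi> \<eta> = {\<sigma>. (\<forall>\<xi>\<in>ball 0 1. affine_of \<sigma> \<xi> \<le> lower_envelope \<phi> \<xi>)
      \<and> affine_of \<sigma> \<eta> = lower_envelope \<phi> \<eta>}"

lemma Sigma_minus_eq_support_set: "Sigma_minus X = support_set (phiX X)"
  by (simp add: fun_eq_iff Sigma_minus_def support_set_def mink_lift phi_minus_eq_lower_envelope)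

lemma Sigma_plus_eq_support_set: "Sigma_plus X \<eta> = uminus ` support_set (\<lambda>z. - phiX X z) \<eta>"
proof -
  have "Sigma_plus X \<eta> = {\<sigma>. - \<sigma> \<in> support_set (\<lambda>z. - phiX X z) \<eta>}"
    by (auto simp: Sigma_plus_def support_set_def mink_lift phi_plus_eq_lower_envelope affine_of_uminus)
  also have "\<dots> = uminus ` support_set (\<lambda>z. - phiX X z) \<eta>"
    by (force simp: image_iff)
  finally show ?thesis .
qed

lemma minorant_if_le_lower_envelope:
  assumes bdd: "bdd_below (\<phi> ` sphere 0 1)"
    and le: "\<forall>\<xi>\<in>ball 0 1. affine_of \<sigma> \<xi> \<le> lower_envelope \<phi> \<xi>"
  shows "minorant \<phi> \<sigma>"
  unfolding minorant_def
proof
  fix z :: complex assume z: "z \<in> sphere 0 1"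
  let ?lhs = "\<lambda>s. (1 - s) * affine_of \<sigma> z + s * affine_of \<sigma> 0"
  let ?rhs = "\<lambda>s. (1 - s) * \<phi> z + s * lower_envelope \<phi> 0"
  have "?lhs s \<le> ?rhs s" if s: "s \<in> {0<..<1}" for s
  proof -
    have "norm ((1 - s) *\<^sub>R z) = 1 - s" using z s by simp
    then have "(1 - s) *\<^sub>R z + s *\<^sub>R 0 \<in> ball 0 1" using s by simp
    then have "affine_of \<sigma> ((1 - s) *\<^sub>R z + s *\<^sub>R 0) \<le> lower_envelope \<phi> ((1 - s) *\<^sub>R z + s *\<^sub>R 0)"
      using le by blast
    also have "\<dots> \<le> ?rhs s"
      by (rule lower_envelope_le_along_ray[OF bdd z]) (use s in auto)
    finally show ?thesis by (simp only: affine_of_convex_combination)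
  qed
  then have "eventually (\<lambda>s. ?lhs s \<le> ?rhs s) (at_right 0)"
    using eventually_at_right_real[of 0 1] by (auto elim: eventually_mono)
  moreover have "(?lhs \<longlongrightarrow> affine_of \<sigma> z) (at_right 0)" "(?rhs \<longlongrightarrow> \<phi> z) (at_right 0)"
    by (auto intro!: tendsto_eq_intros)
  ultimately show "affine_of \<sigma> z \<le> \<phi> z"
    by (intro tendsto_le[OF trivial_limit_at_right_real])
qed

lemma support_set_eq:
  assumes "bdd_below (\<phi> ` sphere 0 1)" "\<eta> \<in> ball 0 1"
  shows "support_set \<phi> \<eta> = {\<sigma>. minorant \<phi> \<sigma> \<and> lower_envelope \<phi> \<eta> \<le> affine_of \<sigma> \<eta>}"
proof (intro set_eqI iffI; clarify)
  fix \<sigma> assume "\<sigma> \<in> support_set \<phi> \<eta>"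
  then show "minorant \<phi> \<sigma> \<and> lower_envelope \<phi> \<eta> \<le> affine_of \<sigma> \<eta>"
    using minorant_if_le_lower_envelope[OF assms(1)] by (simp add: support_set_def)
next
  fix \<sigma> assume "minorant \<phi> \<sigma>" "lower_envelope \<phi> \<eta> \<le> affine_of \<sigma> \<eta>"
  moreover have "affine_of \<sigma> \<xi> \<le> lower_envelope \<phi> \<xi>" if "\<xi> \<in> ball 0 1" for \<xi>
    using minorant_le_lower_envelope[OF \<open>minorant \<phi> \<sigma>\<close>] that by simp
  ultimately show "\<sigma> \<in> support_set \<phi> \<eta>"
    using assms(2) by (auto simp: support_set_def intro: antisym)
qed

definition axis_points :: "complex \<Rightarrow> real \<Rightarrow> complex set" where
  "axis_points \<eta> \<rho> = {\<eta> + of_real \<rho>, \<eta> - of_real \<rho>, \<eta> + \<i> * of_real \<rho>, \<eta> - \<i> * of_real \<rho>}"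

lemma axis_points_subset_cball: "0 \<le> \<rho> \<Longrightarrow> axis_points \<eta> \<rho> \<subseteq> cball \<eta> \<rho>"
  by (auto simp: axis_points_def dist_norm norm_mult)

lemma axis_points_subset_ball: "0 \<le> \<rho> \<Longrightarrow> cmod \<eta> + \<rho> < 1 \<Longrightarrow> axis_points \<eta> \<rho> \<subseteq> ball 0 1"
  using axis_points_subset_cball cball_subset_ball_iff[of \<eta> \<rho> 0 1] by (auto simp: dist_norm)

lemma gradient_bound:
  assumes "0 \<le> \<rho>" "\<forall>p\<in>axis_points \<eta> \<rho>. affine_of \<sigma> p \<le> U"
  shows "\<rho> * (\<bar>\<sigma>$2\<bar> + \<bar>\<sigma>$3\<bar>) \<le> 2 * (U - affine_of \<sigma> \<eta>)"
proof -
  have "affine_of \<sigma> (\<eta> + of_real \<rho>) = affine_of \<sigma> \<eta> + \<rho> * \<sigma>$2"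
    "affine_of \<sigma> (\<eta> - of_real \<rho>) = affine_of \<sigma> \<eta> - \<rho> * \<sigma>$2"
    "affine_of \<sigma> (\<eta> + \<i> * of_real \<rho>) = affine_of \<sigma> \<eta> + \<rho> * \<sigma>$3"
    "affine_of \<sigma> (\<eta> - \<i> * of_real \<rho>) = affine_of \<sigma> \<eta> - \<rho> * \<sigma>$3"
    by (simp_all add: affine_of_def algebra_simps)
  then have "\<bar>\<rho> * \<sigma>$2\<bar> \<le> U - affine_of \<sigma> \<eta>" "\<bar>\<rho> * \<sigma>$3\<bar> \<le> U - affine_of \<sigma> \<eta>"
    using assms(2) unfolding abs_le_iff axis_points_def by auto
  then have "\<rho> * \<bar>\<sigma>$2\<bar> \<le> U - affine_of \<sigma> \<eta>" "\<rho> * \<bar>\<sigma>$3\<bar> \<le> U - affine_of \<sigma> \<eta>"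
    using assms(1) by (simp_all add: abs_mult)
  then show ?thesis by (smt (verit) distrib_left)
qed

lemma norm_le_gradient_affine_of:
  assumes "cmod \<eta> \<le> 1"
  shows "norm \<sigma> \<le> 2 * (\<bar>\<sigma>$2\<bar> + \<bar>\<sigma>$3\<bar>) + \<bar>affine_of \<sigma> \<eta>\<bar>"
proof -
  have "\<bar>Re \<eta>\<bar> \<le> 1" "\<bar>Im \<eta>\<bar> \<le> 1"
    using abs_Re_le_cmod[of \<eta>] abs_Im_le_cmod[of \<eta>] assms by linarith+
  then have "\<bar>\<sigma>$2 * Re \<eta>\<bar> \<le> \<bar>\<sigma>$2\<bar>" "\<bar>\<sigma>$3 * Im \<eta>\<bar> \<le> \<bar>\<sigma>$3\<bar>"
    by (simp_all add: abs_mult mult_left_le)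
  moreover have "\<bar>\<sigma>$1\<bar> \<le> \<bar>\<sigma>$2 * Re \<eta>\<bar> + \<bar>\<sigma>$3 * Im \<eta>\<bar> + \<bar>affine_of \<sigma> \<eta>\<bar>"
  proof -
    have "\<sigma>$1 = \<sigma>$2 * Re \<eta> + \<sigma>$3 * Im \<eta> - affine_of \<sigma> \<eta>"
      by (simp add: affine_of_def)
    then show ?thesis by (simp add: abs_le_iff) linarith
  qed
  moreover have "norm \<sigma> \<le> \<bar>\<sigma>$1\<bar> + \<bar>\<sigma>$2\<bar> + \<bar>\<sigma>$3\<bar>"
    using norm_le_l1_cart[of \<sigma>] by (simp add: sum_3)
  ultimately show ?thesis by (smt (verit))
qed

lemma compact_minorants_above:
  assumes "\<eta> \<in> ball 0 1"
  shows "compact {\<sigma>. minorant \<phi> \<sigma> \<and> c \<le> affine_of \<sigma> \<eta>}"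
proof -
  define \<rho> where "\<rho> = (1 - cmod \<eta>) / 2"
  have \<rho>: "0 < \<rho>" "cmod \<eta> + \<rho> < 1" using assms by (auto simp: \<rho>_def field_simps)
  define U where "U = Max (lower_envelope \<phi> ` axis_points \<eta> \<rho>)"
  define B where "B = 4 * (U - c) / \<rho> + \<bar>c\<bar> + \<bar>lower_envelope \<phi> \<eta>\<bar>"
  have "norm \<sigma> \<le> B" if \<sigma>: "minorant \<phi> \<sigma>" "c \<le> affine_of \<sigma> \<eta>" for \<sigma>
  proof -
    have "affine_of \<sigma> p \<le> U" if p: "p \<in> axis_points \<eta> \<rho>" for p
    proof -
      have "affine_of \<sigma> p \<le> lower_envelope \<phi> p"
        using minorant_le_lower_envelope[OF \<sigma>(1)] p axis_points_subset_ball[OF _ \<rho>(2)] \<rho>(1)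
        by fastforce
      also have "\<dots> \<le> U"
        unfolding U_def using p by (intro Max_ge finite_imageI imageI) (simp_all add: axis_points_def)
      finally show ?thesis .
    qed
    then have "\<rho> * (\<bar>\<sigma>$2\<bar> + \<bar>\<sigma>$3\<bar>) \<le> 2 * (U - c)"
      using gradient_bound[of \<rho> \<eta> \<sigma> U] \<rho>(1) \<sigma>(2) by auto
    then have "2 * (\<bar>\<sigma>$2\<bar> + \<bar>\<sigma>$3\<bar>) \<le> 4 * (U - c) / \<rho>"
      using \<rho>(1) by (simp add: field_simps)
    moreover have "affine_of \<sigma> \<eta> \<le> lower_envelope \<phi> \<eta>"
      using minorant_le_lower_envelope[OF \<sigma>(1)] assms by simp
    ultimately show ?thesis
      using norm_le_gradient_affine_of[of \<eta> \<sigma>] assms \<sigma>(2) unfolding B_def by simp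
  qed
  then have "bounded {\<sigma>. minorant \<phi> \<sigma> \<and> c \<le> affine_of \<sigma> \<eta>}"
    by (auto simp: bounded_iff)
  moreover have "closed {\<sigma>. minorant \<phi> \<sigma> \<and> c \<le> affine_of \<sigma> \<eta>}"
    using closed_Int[OF closed_minorants closed_halfspace_ge[of c "vector [-1, Re \<eta>, Im \<eta>]"]]
    by (simp add: affine_of_eq_inner Int_def)
  ultimately show ?thesis by (simp add: compact_eq_bounded_closed)
qed

lemma compact_support_set:
  assumes "bdd_below (\<phi> ` sphere 0 1)" "\<eta> \<in> ball 0 1"
  shows "compact (support_set \<phi> \<eta>)"
  unfolding support_set_eq[OF assms] by (rule compact_minorants_above[OF assms(2)])

lemma convex_support_set:
  assumes "bdd_below (\<phi> ` sphere 0 1)" "\<eta> \<in> ball 0 1"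
  shows "convex (support_set \<phi> \<eta>)"
  using convex_Int[OF convex_minorants convex_halfspace_ge[of "lower_envelope \<phi> \<eta>" "vector [-1, Re \<eta>, Im \<eta>]"]]
  by (simp add: support_set_eq[OF assms] affine_of_eq_inner Int_def)

lemma support_set_nonempty:
  assumes bdd: "bdd_below (\<phi> ` sphere 0 1)" and \<eta>: "\<eta> \<in> ball 0 1"
  shows "support_set \<phi> \<eta> \<noteq> {}"
proof -
  define P where "P = lower_envelope \<phi> \<eta>"
  define A where "A = {\<sigma>. minorant \<phi> \<sigma> \<and> P - 1 \<le> affine_of \<sigma> \<eta>}"
  have ne: "Collect (minorant \<phi>) \<noteq> {}" using exists_minorant[OF bdd] by blast
  have bdd_above: "bdd_above ((\<lambda>\<sigma>. affine_of \<sigma> \<eta>) ` Collect (minorant \<phi>))"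
    using \<eta> by (intro bdd_above_minorant_values) simp
  have "P - 1 < (SUP \<sigma>\<in>Collect (minorant \<phi>). affine_of \<sigma> \<eta>)"
    by (simp add: P_def lower_envelope_def)
  then have "\<exists>\<sigma>\<in>Collect (minorant \<phi>). P - 1 < affine_of \<sigma> \<eta>"
    unfolding less_cSUP_iff[OF ne bdd_above] .
  then have "A \<noteq> {}" unfolding A_def by auto
  moreover have "compact A" unfolding A_def by (rule compact_minorants_above[OF \<eta>])
  ultimately have "\<exists>s\<in>A. \<forall>\<sigma>\<in>A. affine_of \<sigma> \<eta> \<le> affine_of s \<eta>"
    by (intro continuous_attains_sup continuous_on_affine_of)
  then obtain s where s: "s \<in> A" "\<And>\<sigma>. \<sigma> \<in> A \<Longrightarrow> affine_of \<sigma> \<eta> \<le> affine_of s \<eta>"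
    by blast
  have "P \<le> affine_of s \<eta>"
    unfolding P_def
  proof (rule lower_envelope_le[OF bdd])
    fix \<sigma> assume "minorant \<phi> \<sigma>"
    then show "affine_of \<sigma> \<eta> \<le> affine_of s \<eta>"
      using s unfolding A_def by (cases "P - 1 \<le> affine_of \<sigma> \<eta>") auto
  qed
  then have "s \<in> support_set \<phi> \<eta>"
    using s(1) by (simp add: support_set_eq[OF bdd \<eta>] A_def P_def)
  then show ?thesis by blast
qed

lemma mean_plus_spread_le:
  fixes l \<alpha> \<beta> u :: real
  assumes "l \<le> u" "l + \<alpha> \<le> u" "l + \<beta> \<le> u"
  shows "l + \<alpha> / 3 + \<beta> / 3 + \<bar>\<alpha>\<bar> / 6 + \<bar>\<beta>\<bar> / 6 \<le> u"
proof -
  have "6 * l + 2 * \<alpha> + 2 * \<beta> + \<bar>\<alpha>\<bar> + \<bar>\<beta>\<bar> \<le> 6 * u"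
    using assms by (cases "0 \<le> \<alpha>"; cases "0 \<le> \<beta>") (simp_all add: abs_if)
  then show ?thesis by linarith
qed

lemma abs_det_mult_l1_le:
  fixes p q r s d1 d2 :: real
  shows "\<bar>p * s - q * r\<bar> * (\<bar>d1\<bar> + \<bar>d2\<bar>)
    \<le> 2 * (\<bar>p\<bar> + \<bar>q\<bar> + \<bar>r\<bar> + \<bar>s\<bar>) * (\<bar>p * d1 + q * d2\<bar> + \<bar>r * d1 + s * d2\<bar>)"
proof -
  define \<alpha> \<beta> N where "\<alpha> = p * d1 + q * d2" and "\<beta> = r * d1 + s * d2"
    and "N = \<bar>p\<bar> + \<bar>q\<bar> + \<bar>r\<bar> + \<bar>s\<bar>"
  \<comment> \<open>Cramer's rule expresses \<open>d\<close> through \<open>\<alpha>\<close> and \<open>\<beta>\<close>\<close>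
  have "(p * s - q * r) * d1 = s * \<alpha> - q * \<beta>" "(p * s - q * r) * d2 = p * \<beta> - r * \<alpha>"
    by (simp_all add: \<alpha>_def \<beta>_def N_def algebra_simps)
  then have h1: "\<bar>p * s - q * r\<bar> * \<bar>d1\<bar> \<le> \<bar>s\<bar> * \<bar>\<alpha>\<bar> + \<bar>q\<bar> * \<bar>\<beta>\<bar>"
    and h2: "\<bar>p * s - q * r\<bar> * \<bar>d2\<bar> \<le> \<bar>r\<bar> * \<bar>\<alpha>\<bar> + \<bar>p\<bar> * \<bar>\<beta>\<bar>"
    using abs_triangle_ineq4[of "s * \<alpha>" "q * \<beta>"] abs_triangle_ineq4[of "p * \<beta>" "r * \<alpha>"]
    by (simp_all add: add.commute flip: abs_mult)
  have "\<bar>s\<bar> \<le> N" "\<bar>q\<bar> \<le> N" "\<bar>r\<bar> \<le> N" "\<bar>p\<bar> \<le> N"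
    unfolding N_def by linarith+
  then have "\<bar>s\<bar> * \<bar>\<alpha>\<bar> + \<bar>q\<bar> * \<bar>\<beta>\<bar> \<le> N * \<bar>\<alpha>\<bar> + N * \<bar>\<beta>\<bar>"
    "\<bar>r\<bar> * \<bar>\<alpha>\<bar> + \<bar>p\<bar> * \<bar>\<beta>\<bar> \<le> N * \<bar>\<alpha>\<bar> + N * \<bar>\<beta>\<bar>"
    by (simp_all add: add_mono mult_right_mono)
  then have "\<bar>p * s - q * r\<bar> * \<bar>d1\<bar> + \<bar>p * s - q * r\<bar> * \<bar>d2\<bar>
      \<le> (N * \<bar>\<alpha>\<bar> + N * \<bar>\<beta>\<bar>) + (N * \<bar>\<alpha>\<bar> + N * \<bar>\<beta>\<bar>)"
    using h1 h2 by (meson add_mono order_trans)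
  also have "\<dots> = 2 * N * (\<bar>\<alpha>\<bar> + \<bar>\<beta>\<bar>)" by (simp add: algebra_simps)
  finally show ?thesis
    unfolding \<alpha>_def \<beta>_def N_def by (simp add: distrib_left)
qed

lemma affine_differences_lower_bound:
  assumes w: "w \<in> sphere 0 1" and eq: "affine_of b \<eta> = affine_of a \<eta>" "affine_of x \<eta> = affine_of a \<eta>"
  shows "\<bar>(b$2 - a$2) * (x$3 - a$3) - (b$3 - a$3) * (x$2 - a$2)\<bar> * (1 - cmod \<eta>)
    \<le> 2 * (\<bar>b$2 - a$2\<bar> + \<bar>b$3 - a$3\<bar> + \<bar>x$2 - a$2\<bar> + \<bar>x$3 - a$3\<bar>)
      * (\<bar>affine_of b w - affine_of a w\<bar> + \<bar>affine_of x w - affine_of a w\<bar>)"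
proof -
  define d1 d2 where "d1 = Re w - Re \<eta>" and "d2 = Im w - Im \<eta>"
  have "affine_of b w - affine_of a w = (b$2 - a$2) * d1 + (b$3 - a$3) * d2"
    "affine_of x w - affine_of a w = (x$2 - a$2) * d1 + (x$3 - a$3) * d2"
    using eq by (simp_all add: affine_of_def d1_def d2_def algebra_simps)
  moreover have "1 - cmod \<eta> \<le> \<bar>d1\<bar> + \<bar>d2\<bar>"
    using norm_triangle_ineq2[of w \<eta>] cmod_le[of "w - \<eta>"] w by (simp add: d1_def d2_def)
  then have "\<bar>(b$2 - a$2) * (x$3 - a$3) - (b$3 - a$3) * (x$2 - a$2)\<bar> * (1 - cmod \<eta>)
      \<le> \<bar>(b$2 - a$2) * (x$3 - a$3) - (b$3 - a$3) * (x$2 - a$2)\<bar> * (\<bar>d1\<bar> + \<bar>d2\<bar>)"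
    by (rule mult_left_mono) simp
  ultimately show ?thesis
    using abs_det_mult_l1_le[of "b$2 - a$2" "x$3 - a$3" "b$3 - a$3" "x$2 - a$2" d1 d2] by simp
qed

text \<open>If three support planes at \<open>\<eta>\<close> had affinely independent gradients, their average, raised
  by a small \<open>\<delta>\<close>, would still lie below \<open>\<phi>\<close> on the circle (far from \<open>\<eta>\<close> one of the three
  planes is well above the average) but above the envelope at \<open>\<eta>\<close>.\<close>

lemma support_gradients_collinear:
  assumes \<eta>: "\<eta> \<in> ball 0 1"
    and min: "minorant \<phi> a" "minorant \<phi> b" "minorant \<phi> x"
    and at_\<eta>: "affine_of a \<eta> = lower_envelope \<phi> \<eta>" "affine_of b \<eta> = lower_envelope \<phi> \<eta>"
      "affine_of x \<eta> = lower_envelope \<phi> \<eta>"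
  shows "(b$2 - a$2) * (x$3 - a$3) = (b$3 - a$3) * (x$2 - a$2)"
proof (rule ccontr)
  define \<kappa> N where "\<kappa> = (b$2 - a$2) * (x$3 - a$3) - (b$3 - a$3) * (x$2 - a$2)"
    and "N = \<bar>b$2 - a$2\<bar> + \<bar>b$3 - a$3\<bar> + \<bar>x$2 - a$2\<bar> + \<bar>x$3 - a$3\<bar>"
  assume "\<not> ?thesis"
  then have \<kappa>: "\<kappa> \<noteq> 0" by (simp add: \<kappa>_def)
  have N: "N > 0" using \<kappa> unfolding \<kappa>_def N_def by (smt (verit) mult_eq_0_iff)
  define \<delta> where "\<delta> = \<bar>\<kappa>\<bar> * (1 - cmod \<eta>) / (12 * N)"
  have \<delta>: "\<delta> > 0" using \<kappa> N \<eta> by (simp add: \<delta>_def)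
  define \<tau> :: "real^3" where "\<tau> = (1 / 3) *\<^sub>R (a + b + x) + vector [- \<delta>, 0, 0]"
  have \<tau>: "affine_of \<tau> \<xi> = affine_of a \<xi> / 3 + affine_of b \<xi> / 3 + affine_of x \<xi> / 3 + \<delta>" for \<xi>
    by (simp add: \<tau>_def affine_of_def field_simps)
  have "minorant \<phi> \<tau>"
    unfolding minorant_def
  proof
    fix w :: complex assume w: "w \<in> sphere 0 1"
    define \<alpha> \<beta> where "\<alpha> = affine_of b w - affine_of a w" and "\<beta> = affine_of x w - affine_of a w"
    have "\<bar>\<kappa>\<bar> * (1 - cmod \<eta>) \<le> 2 * N * (\<bar>\<alpha>\<bar> + \<bar>\<beta>\<bar>)"
      unfolding \<kappa>_def N_def \<alpha>_def \<beta>_def using w at_\<eta> by (intro affine_differences_lower_bound) auto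
    then have "\<delta> \<le> (\<bar>\<alpha>\<bar> + \<bar>\<beta>\<bar>) / 6"
      using N by (simp add: \<delta>_def field_simps)
    then have "\<delta> \<le> \<bar>\<alpha>\<bar> / 6 + \<bar>\<beta>\<bar> / 6" by (simp add: add_divide_distrib)
    moreover have "affine_of a w \<le> \<phi> w" "affine_of a w + \<alpha> \<le> \<phi> w" "affine_of a w + \<beta> \<le> \<phi> w"
      using min w unfolding minorant_def \<alpha>_def \<beta>_def by auto
    then have "affine_of a w + \<alpha> / 3 + \<beta> / 3 + \<bar>\<alpha>\<bar> / 6 + \<bar>\<beta>\<bar> / 6 \<le> \<phi> w"
      by (rule mean_plus_spread_le)
    ultimately show "affine_of \<tau> w \<le> \<phi> w"
      using \<tau>[of w] \<alpha>_def \<beta>_def by linarith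
  qed
  then have "affine_of \<tau> \<eta> \<le> lower_envelope \<phi> \<eta>"
    using \<eta> by (intro minorant_le_lower_envelope) auto
  moreover have "affine_of \<tau> \<eta> = lower_envelope \<phi> \<eta> + \<delta>"
    using \<tau>[of \<eta>] at_\<eta> by simp
  ultimately show False using \<delta> by simp
qed

lemma collinear_if_gradients_collinear:
  fixes S :: "(real^3) set"
  assumes level: "\<And>\<sigma>. \<sigma> \<in> S \<Longrightarrow> affine_of \<sigma> \<eta> = c"
    and grad: "\<And>a b x. a \<in> S \<Longrightarrow> b \<in> S \<Longrightarrow> x \<in> S \<Longrightarrow>
      (b$2 - a$2) * (x$3 - a$3) = (b$3 - a$3) * (x$2 - a$2)"
  shows "collinear S"
proof (cases "\<exists>a\<in>S. \<exists>b\<in>S. a \<noteq> b")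
  case False
  then have "S = {} \<or> (\<exists>a. S = {a})" by blast
  then show ?thesis by auto
next
  case True
  then obtain a b where ab: "a \<in> S" "b \<in> S" "a \<noteq> b" by blast
  define p q where "p = b$2 - a$2" and "q = b$3 - a$3"
  have pq: "p\<^sup>2 + q\<^sup>2 \<noteq> 0"
  proof
    assume "p\<^sup>2 + q\<^sup>2 = 0"
    then have "b$2 = a$2" "b$3 = a$3" by (auto simp: p_def q_def)
    moreover from this have "b$1 = a$1"
      using level[OF ab(1)] level[OF ab(2)] by (simp add: affine_of_def)
    ultimately show False using ab(3) by (simp add: vec_eq_iff forall_3)
  qed
  show ?thesis
    unfolding collinear_alt
  proof (intro exI ballI)
    fix x assume x: "x \<in> S"
    define r s where "r = x$2 - a$2" and "s = x$3 - a$3"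
    define t where "t = (p * r + q * s) / (p\<^sup>2 + q\<^sup>2)"
    have g: "p * s = q * r" using grad[OF ab(1,2) x] by (simp add: p_def q_def r_def s_def)
    have "(p * r + q * s) * p = r * (p\<^sup>2 + q\<^sup>2)" "(p * r + q * s) * q = s * (p\<^sup>2 + q\<^sup>2)"
      using g by (simp_all add: power2_eq_square algebra_simps)
    then have "t * p = r" "t * q = s"
      using pq by (simp_all add: t_def)
    then have 2: "x$2 = a$2 + t * (b$2 - a$2)" and 3: "x$3 = a$3 + t * (b$3 - a$3)"
      unfolding p_def q_def r_def s_def by simp_all
    have "x$1 - a$1 = r * Re \<eta> + s * Im \<eta>" "b$1 - a$1 = p * Re \<eta> + q * Im \<eta>"
      using level[OF ab(1)] level[OF ab(2)] level[OF x]
      by (simp_all add: affine_of_def p_def q_def r_def s_def algebra_simps)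
    moreover have "t * (p * Re \<eta> + q * Im \<eta>) = r * Re \<eta> + s * Im \<eta>"
      using \<open>t * p = r\<close> \<open>t * q = s\<close> by (simp add: distrib_left flip: mult.assoc)
    ultimately have 1: "x$1 = a$1 + t * (b$1 - a$1)" by simp
    show "x = a + t *\<^sub>R (b - a)"
      using 1 2 3 by (simp add: vec_eq_iff forall_3)
  qed
qed

lemma collinear_support_set:
  assumes "bdd_below (\<phi> ` sphere 0 1)" "\<eta> \<in> ball 0 1"
  shows "collinear (support_set \<phi> \<eta>)"
proof (rule collinear_if_gradients_collinear[where \<eta> = \<eta> and c = "lower_envelope \<phi> \<eta>"])
  fix a b x assume abx: "a \<in> support_set \<phi> \<eta>" "b \<in> support_set \<phi> \<eta>" "x \<in> support_set \<phi> \<eta>"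
  then have "minorant \<phi> a" "minorant \<phi> b" "minorant \<phi> x"
    by (simp_all add: support_set_eq[OF assms])
  moreover have "affine_of a \<eta> = lower_envelope \<phi> \<eta>" "affine_of b \<eta> = lower_envelope \<phi> \<eta>"
    "affine_of x \<eta> = lower_envelope \<phi> \<eta>"
    using abx by (simp_all add: support_set_def)
  ultimately show "(b$2 - a$2) * (x$3 - a$3) = (b$3 - a$3) * (x$2 - a$2)"
    by (rule support_gradients_collinear[OF assms(2)])
qed (simp add: support_set_def)

lemma support_set_closed_segment:
  assumes "bdd_below (\<phi> ` sphere 0 1)" "\<eta> \<in> ball 0 1"
  obtains p q where "support_set \<phi> \<eta> = closed_segment p q"
  using compact_convex_collinear_segment[OF support_set_nonempty[OF assms]
      compact_support_set[OF assms] convex_support_set[OF assms] collinear_support_set[OF assms]]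
  by blast

lemma mcross_eq:
  "mcross x y = vector [x$3 * y$2 - x$2 * y$3, x$3 * y$1 - x$1 * y$3, x$1 * y$2 - x$2 * y$1]"
proof -
  let ?w = "vector [x$3 * y$2 - x$2 * y$3, x$3 * y$1 - x$1 * y$3, x$1 * y$2 - x$2 * y$1] :: real^3"
  have w: "\<forall>v. mink ?w v = det (vector [x, y, v] :: real^3^3)"
    by (auto simp: mink_def det_3 algebra_simps)
  have "w = ?w" if "\<forall>v. mink w v = det (vector [x, y, v] :: real^3^3)" for w
  proof -
    have "mink w v = mink ?w v" for v using that w by simp
    from this[of "vector [1, 0, 0]"] this[of "vector [0, 1, 0]"] this[of "vector [0, 0, 1]"]
    show ?thesis by (simp add: mink_def vec_eq_iff forall_3)
  qed
  with w show ?thesis unfolding mcross_def by (rule the_equality)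
qed

lemma Pi_proj_has_derivative:
  assumes "p$1 = 1"
  shows "(Pi_proj has_derivative (\<lambda>w. Complex (w$2 - p$2 * w$1) (w$3 - p$3 * w$1))) (at p)"
proof -
  have Pi: "Pi_proj = (\<lambda>x. of_real (x$2 / x$1) + \<i> * of_real (x$3 / x$1))"
    by (auto simp: Pi_proj_def fun_eq_iff complex_eq_iff)
  have nth: "((\<lambda>x::real^3. x$i) has_derivative (\<lambda>w. w$i)) (at p)" for i
    by (rule bounded_linear_imp_has_derivative) (rule bounded_linear_vec_nth)
  show ?thesis unfolding Pi
    by (rule derivative_eq_intros nth refl | simp add: assms)+
      (auto simp: complex_eq_iff assms algebra_simps)
qed

definition deformation :: "complex \<Rightarrow> real^3 \<Rightarrow> complex" where
  "deformation \<eta> \<sigma> =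
     \<i> * (\<eta> * of_real (affine_of \<sigma> \<eta>) + of_real (1 - (cmod \<eta>)\<^sup>2) * Complex (\<sigma>$2) (\<sigma>$3))"

lemma frechet_derivative_Pi_proj_mcross:
  "frechet_derivative Pi_proj (at (lift \<eta>)) (mcross (lift \<eta>) \<sigma>) = deformation \<eta> \<sigma>"
proof -
  have "frechet_derivative Pi_proj (at (lift \<eta>))
      = (\<lambda>w. Complex (w$2 - (lift \<eta>)$2 * w$1) (w$3 - (lift \<eta>)$3 * w$1))"
    by (rule frechet_derivative_at[symmetric], rule Pi_proj_has_derivative) (simp add: lift_def)
  then show ?thesis
    unfolding mcross_eq deformation_def affine_of_def cmod_power2
    by (simp add: lift_def complex_eq_iff algebra_simps power2_eq_square)
qed

lemma deformation_uminus: "deformation \<eta> (- \<sigma>) = - deformation \<eta> \<sigma>"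
  by (simp add: deformation_def affine_of_uminus complex_eq_iff algebra_simps)

lemma sel_mid_closed_segment: "sel_mid (closed_segment p q) = midpoint p q"
  unfolding sel_mid_def
proof (rule the_equality)
  fix m assume "\<exists>p' q'. closed_segment p q = closed_segment p' q' \<and> m = midpoint p' q'"
  then obtain p' q' where "closed_segment p q = closed_segment p' q'" "m = midpoint p' q'" by blast
  then have "{p, q} = {p', q'}" "m = midpoint p' q'" by auto
  then show "m = midpoint p q" by (auto simp: doubleton_eq_iff midpoint_sym)
qed blast

lemma sel_mid_support_set_mem:
  assumes "bdd_below (\<phi> ` sphere 0 1)" "\<eta> \<in> ball 0 1"
  shows "sel_mid (support_set \<phi> \<eta>) \<in> support_set \<phi> \<eta>"
proof -
  obtain p q where "support_set \<phi> \<eta> = closed_segment p q"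
    using support_set_closed_segment[OF assms] by blast
  then show ?thesis by (simp add: sel_mid_closed_segment)
qed

lemma E_minus_eq_deformation: "E_minus X \<eta> = deformation \<eta> (sel_mid (support_set (phiX X) \<eta>))"
  by (simp add: E_minus_def Sigma_minus_eq_support_set frechet_derivative_Pi_proj_mcross)

lemma phiX_uminus: "phiX (\<lambda>z. - X z) = (\<lambda>z. - phiX X z)"
  by (simp add: fun_eq_iff phiX_def)

lemma E_plus_eq_uminus_E_minus:
  assumes "bdd_below (phiX (\<lambda>z. - X z) ` sphere 0 1)" "\<eta> \<in> ball 0 1"
  shows "E_plus X \<eta> = - E_minus (\<lambda>z. - X z) \<eta>"
proof -
  obtain p q where pq: "support_set (\<lambda>z. - phiX X z) \<eta> = closed_segment p q"
    using support_set_closed_segment[OF assms[unfolded phiX_uminus]] by blast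
  have "Sigma_plus X \<eta> = closed_segment (- p) (- q)"
    unfolding Sigma_plus_eq_support_set pq
    by (rule closed_segment_linear_image[OF linear_uminus, symmetric])
  moreover have "midpoint (- p) (- q) = - midpoint p q"
    by (simp add: midpoint_def algebra_simps)
  ultimately show ?thesis
    by (simp add: E_plus_def E_minus_def Sigma_minus_eq_support_set phiX_uminus pq
        sel_mid_closed_segment frechet_derivative_Pi_proj_mcross deformation_uminus)
qed

lemma norm_deformation_remainder_le:
  assumes \<sigma>: "\<sigma> \<in> support_set \<phi> \<eta>" and \<rho>: "0 < \<rho>" "cmod \<eta> + \<rho> < 1"
    and U: "\<forall>p\<in>axis_points \<eta> \<rho>. lower_envelope \<phi> p \<le> U"
  shows "cmod (deformation \<eta> \<sigma> - \<i> * \<eta> * of_real (lower_envelope \<phi> \<eta>))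
    \<le> 4 * ((1 - cmod \<eta>) / \<rho>) * (U - lower_envelope \<phi> \<eta>)"
proof -
  define G where "G = \<bar>\<sigma>$2\<bar> + \<bar>\<sigma>$3\<bar>"
  have \<eta>: "cmod \<eta> < 1" using \<rho> by simp
  have "affine_of \<sigma> p \<le> U" if "p \<in> axis_points \<eta> \<rho>" for p
  proof -
    have "p \<in> ball 0 1" using that axis_points_subset_ball[OF _ \<rho>(2)] \<rho>(1) by auto
    then have "affine_of \<sigma> p \<le> lower_envelope \<phi> p" using \<sigma> by (simp add: support_set_def)
    then show ?thesis using U that by fastforce
  qed
  then have "\<rho> * G \<le> 2 * (U - lower_envelope \<phi> \<eta>)"
    using gradient_bound[of \<rho> \<eta> \<sigma> U] \<rho>(1) \<sigma> by (simp add: G_def support_set_def)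
  then have G: "G \<le> 2 * (U - lower_envelope \<phi> \<eta>) / \<rho>"
    using \<rho>(1) by (simp add: field_simps)
  have t: "0 \<le> 1 - (cmod \<eta>)\<^sup>2" using \<eta> by (simp add: abs_square_le_1)
  have "deformation \<eta> \<sigma> - \<i> * \<eta> * of_real (lower_envelope \<phi> \<eta>)
      = \<i> * of_real (1 - (cmod \<eta>)\<^sup>2) * Complex (\<sigma>$2) (\<sigma>$3)"
    using \<sigma> by (simp add: deformation_def support_set_def algebra_simps)
  then have "cmod (deformation \<eta> \<sigma> - \<i> * \<eta> * of_real (lower_envelope \<phi> \<eta>))
      = \<bar>1 - (cmod \<eta>)\<^sup>2\<bar> * cmod (Complex (\<sigma>$2) (\<sigma>$3))"
    by (simp only: norm_mult norm_ii norm_of_real mult_1)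
  also have "\<dots> = (1 - (cmod \<eta>)\<^sup>2) * cmod (Complex (\<sigma>$2) (\<sigma>$3))"
    using t by simp
  also have "\<dots> \<le> (1 - (cmod \<eta>)\<^sup>2) * G"
    unfolding G_def using \<eta> cmod_le[of "Complex (\<sigma>$2) (\<sigma>$3)"]
    by (intro mult_left_mono) (auto simp: abs_square_le_1)
  also have "\<dots> \<le> (2 * (1 - cmod \<eta>)) * G"
  proof (rule mult_right_mono)
    have "1 - (cmod \<eta>)\<^sup>2 = (1 - cmod \<eta>) * (1 + cmod \<eta>)" by (simp add: power2_eq_square algebra_simps)
    also have "\<dots> \<le> (1 - cmod \<eta>) * 2" using \<eta> by (intro mult_left_mono) auto
    finally show "1 - (cmod \<eta>)\<^sup>2 \<le> 2 * (1 - cmod \<eta>)" by simp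
  qed (simp add: G_def)
  also have "\<dots> \<le> (2 * (1 - cmod \<eta>)) * (2 * (U - lower_envelope \<phi> \<eta>) / \<rho>)"
    using G \<eta> by (intro mult_left_mono) auto
  also have "\<dots> = 4 * ((1 - cmod \<eta>) / \<rho>) * (U - lower_envelope \<phi> \<eta>)"
    by (simp add: field_simps)
  finally show ?thesis .
qed

lemma tendsto_deformation:
  fixes F :: "'a filter" and \<eta> :: "'a \<Rightarrow> complex"
  assumes lim: "(\<eta> \<longlongrightarrow> z) F"
    and \<sigma>: "eventually (\<lambda>i. \<sigma> i \<in> support_set \<phi> (\<eta> i)) F"
    and lim_envelope: "((\<lambda>i. lower_envelope \<phi> (\<eta> i)) \<longlongrightarrow> \<phi> z) F"
    and \<rho>: "eventually (\<lambda>i. 0 < \<rho> i \<and> cmod (\<eta> i) + \<rho> i < 1 \<and> 1 - cmod (\<eta> i) \<le> K * \<rho> i) F"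
    and axis: "\<And>e. e > 0 \<Longrightarrow>
      eventually (\<lambda>i. \<forall>p\<in>axis_points (\<eta> i) (\<rho> i). lower_envelope \<phi> p \<le> \<phi> z + e) F"
  shows "((\<lambda>i. deformation (\<eta> i) (\<sigma> i)) \<longlongrightarrow> \<i> * z * of_real (\<phi> z)) F"
proof -
  define R where "R i = deformation (\<eta> i) (\<sigma> i) - \<i> * \<eta> i * of_real (lower_envelope \<phi> (\<eta> i))" for i
  have "(R \<longlongrightarrow> 0) F"
  proof (rule tendstoI)
    fix \<epsilon> :: real assume \<epsilon>: "\<epsilon> > 0"
    define e where "e = \<epsilon> / (16 * (\<bar>K\<bar> + 1))"
    have e: "e > 0" using \<epsilon> by (simp add: e_def)
    have "eventually (\<lambda>i. \<phi> z - e < lower_envelope \<phi> (\<eta> i)) F"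
      using order_tendstoD(1)[OF lim_envelope, of "\<phi> z - e"] e by simp
    then show "eventually (\<lambda>i. dist (R i) 0 < \<epsilon>) F"
      using \<sigma> \<rho> axis[OF e]
    proof eventually_elim
      case (elim i)
      define a where "a = (1 - cmod (\<eta> i)) / \<rho> i"
      have "K * \<rho> i \<le> \<bar>K\<bar> * \<rho> i" using elim(3) by (intro mult_right_mono) auto
      then have "1 - cmod (\<eta> i) \<le> \<bar>K\<bar> * \<rho> i + \<rho> i" using elim(3) by linarith
      then have a: "0 \<le> a" "a \<le> \<bar>K\<bar> + 1"
        using elim(3) by (simp_all add: a_def field_simps)
      have "cmod (R i) \<le> 4 * a * (\<phi> z + e - lower_envelope \<phi> (\<eta> i))"
        unfolding R_def a_def using elim(2,3,4) by (intro norm_deformation_remainder_le) auto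
      also have "\<dots> \<le> 4 * a * (2 * e)"
        using a elim(1) by (intro mult_left_mono) auto
      also have "\<dots> \<le> 4 * (\<bar>K\<bar> + 1) * (2 * e)"
        using a e by (intro mult_right_mono) auto
      also have "\<dots> = \<epsilon> / 2"
        using abs_ge_zero[of K] by (simp add: e_def field_simps)
      also have "\<dots> < \<epsilon>" using \<epsilon> by simp
      finally show ?case by simp
    qed
  qed
  moreover have "((\<lambda>i. \<i> * \<eta> i * of_real (lower_envelope \<phi> (\<eta> i))) \<longlongrightarrow> \<i> * z * of_real (\<phi> z)) F"
    by (intro tendsto_intros lim lim_envelope)
  ultimately have "((\<lambda>i. R i + \<i> * \<eta> i * of_real (lower_envelope \<phi> (\<eta> i)))
      \<longlongrightarrow> 0 + \<i> * z * of_real (\<phi> z)) F"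
    by (rule tendsto_add)
  then show ?thesis by (simp add: R_def)
qed

lemma tendsto_real_if_eventually_near:
  fixes f :: "'a \<Rightarrow> real"
  assumes "\<And>e. e > 0 \<Longrightarrow> eventually (\<lambda>i. l - e \<le> f i) F"
    and "\<And>e. e > 0 \<Longrightarrow> eventually (\<lambda>i. f i \<le> l + e) F"
  shows "(f \<longlongrightarrow> l) F"
proof (rule order_tendstoI)
  fix a assume "a < l"
  then have "eventually (\<lambda>i. l - (l - a) / 2 \<le> f i) F" by (intro assms(1)) simp
  then show "eventually (\<lambda>i. a < f i) F"
    by eventually_elim (use \<open>a < l\<close> in \<open>simp add: field_simps\<close>)
next
  fix a assume "l < a"
  then have "eventually (\<lambda>i. f i \<le> l + (a - l) / 2) F" by (intro assms(2)) simp
  then show "eventually (\<lambda>i. f i < a) F"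
    by eventually_elim (use \<open>l < a\<close> in \<open>simp add: field_simps\<close>)
qed

lemma eventually_lower_envelope_ge:
  assumes "lsc_on (sphere 0 1) \<phi>" "z \<in> sphere 0 1" "e > 0"
    and "(\<eta> \<longlongrightarrow> z) F" "eventually (\<lambda>i. cmod (\<eta> i) \<le> 1) F"
  shows "eventually (\<lambda>i. \<phi> z - e \<le> lower_envelope \<phi> (\<eta> i)) F"
proof -
  obtain \<delta> where \<delta>: "\<delta> > 0"
    "\<And>\<xi>. cmod \<xi> \<le> 1 \<Longrightarrow> cmod (\<xi> - z) < \<delta> \<Longrightarrow> \<phi> z - e \<le> lower_envelope \<phi> \<xi>"
    using lower_envelope_ge_near[OF assms(1-3)] by blast
  have "eventually (\<lambda>i. cmod (\<eta> i - z) < \<delta>) F"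
    using assms(4) \<delta>(1) by (auto simp: tendsto_iff dist_norm)
  with assms(5) show ?thesis by eventually_elim (use \<delta>(2) in blast)
qed

lemma norm_scaleR_combination_le:
  assumes "z \<in> sphere 0 1" "0 \<le> s" "s \<le> 1"
  shows "cmod ((1 - s) *\<^sub>R z + s *\<^sub>R x) \<le> 1 - s + s * cmod x"
  using norm_triangle_ineq[of "(1 - s) *\<^sub>R z" "s *\<^sub>R x"] assms by simp

lemma one_minus_norm_scaleR_combination_le:
  assumes "z \<in> sphere 0 1" "0 \<le> s"
  shows "1 - cmod ((1 - s) *\<^sub>R z + s *\<^sub>R x) \<le> s * cmod (z - x)"
proof -
  have "1 - cmod ((1 - s) *\<^sub>R z + s *\<^sub>R x) \<le> cmod (z - ((1 - s) *\<^sub>R z + s *\<^sub>R x))"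
    using norm_triangle_ineq2[of z "(1 - s) *\<^sub>R z + s *\<^sub>R x"] assms(1) by simp
  also have "\<dots> = s * cmod (z - x)"
    using assms(2) by (simp add: algebra_simps flip: scaleR_diff_right)
  finally show ?thesis .
qed

lemma scaleR_combination_in_ball:
  assumes "z \<in> sphere 0 1" "x \<in> ball 0 1" "0 < s" "s \<le> 1"
  shows "(1 - s) *\<^sub>R z + s *\<^sub>R x \<in> ball (0::complex) 1"
proof -
  have "s * cmod x < s" using assms mult_strict_left_mono[of "cmod x" 1 s] by simp
  moreover have "cmod ((1 - s) *\<^sub>R z + s *\<^sub>R x) \<le> 1 - s + s * cmod x"
    using assms by (intro norm_scaleR_combination_le) auto
  ultimately show ?thesis unfolding mem_ball_0 by linarith
qed

lemma eventually_lower_envelope_le_on_cball: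
  assumes lsc: "lsc_on (sphere 0 1) \<phi>" and usc: "usc_on (sphere 0 1) \<phi>" and z: "z \<in> sphere 0 1"
    and \<eta>: "\<And>n. \<eta> n \<in> ball 0 1" "\<eta> \<longlonglongrightarrow> z" and e: "e > 0"
  shows "eventually (\<lambda>n. \<forall>p\<in>cball (\<eta> n) ((1 - cmod (\<eta> n)) / 2). lower_envelope \<phi> p \<le> \<phi> z + e)
    sequentially"
proof -
  obtain \<delta> where \<delta>: "\<delta> > 0"
    "\<And>\<xi>. cmod \<xi> \<le> 1 \<Longrightarrow> cmod (\<xi> - z) < \<delta> \<Longrightarrow> lower_envelope \<phi> \<xi> \<le> \<phi> z + e"
    using lower_envelope_le_near[OF lsc usc z e] by blast
  have "eventually (\<lambda>n. cmod (\<eta> n - z) < \<delta> / 2) sequentially"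
    using tendstoD[OF \<eta>(2), of "\<delta> / 2"] \<delta>(1) by (simp add: dist_norm)
  then show ?thesis
  proof (rule eventually_mono, intro ballI)
    fix n p assume n: "cmod (\<eta> n - z) < \<delta> / 2" and p: "p \<in> cball (\<eta> n) ((1 - cmod (\<eta> n)) / 2)"
    have "cball (\<eta> n) ((1 - cmod (\<eta> n)) / 2) \<subseteq> ball 0 1"
      using \<eta>(1)[of n] cball_subset_ball_iff[of "\<eta> n" "(1 - cmod (\<eta> n)) / 2" 0 1]
      by (simp add: dist_norm field_simps)
    then have "cmod p \<le> 1" using p by fastforce
    moreover have "1 - cmod (\<eta> n) \<le> cmod (\<eta> n - z)"
      using norm_triangle_ineq2[of z "\<eta> n"] z by (simp add: norm_minus_commute)
    moreover have "cmod (p - z) \<le> dist p (\<eta> n) + cmod (\<eta> n - z)"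
      using norm_triangle_ineq[of "p - \<eta> n" "\<eta> n - z"] by (simp add: dist_norm)
    moreover have "2 * dist p (\<eta> n) \<le> 1 - cmod (\<eta> n)"
      using p by (simp add: dist_commute field_simps)
    ultimately have "cmod (p - z) < \<delta>" using n \<delta>(1) by linarith
    with \<open>cmod p \<le> 1\<close> show "lower_envelope \<phi> p \<le> \<phi> z + e" by (rule \<delta>(2))
  qed
qed

lemma tendsto_deformation_sequentially:
  assumes lsc: "lsc_on (sphere 0 1) \<phi>" and usc: "usc_on (sphere 0 1) \<phi>" and z: "z \<in> sphere 0 1"
    and \<eta>: "\<And>n. \<eta> n \<in> ball 0 1" "\<eta> \<longlonglongrightarrow> z" and \<sigma>: "\<And>n. \<sigma> n \<in> support_set \<phi> (\<eta> n)"
  shows "(\<lambda>n. deformation (\<eta> n) (\<sigma> n)) \<longlonglongrightarrow> \<i> * z * of_real (\<phi> z)"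
proof -
  define \<rho> where "\<rho> n = (1 - cmod (\<eta> n)) / 2" for n
  have \<rho>: "0 < \<rho> n" "cmod (\<eta> n) + \<rho> n < 1" "1 - cmod (\<eta> n) \<le> 2 * \<rho> n" for n
    using \<eta>(1)[of n] by (auto simp: \<rho>_def field_simps)
  note upper = eventually_lower_envelope_le_on_cball[OF lsc usc z \<eta>, folded \<rho>_def]
  show ?thesis
  proof (rule tendsto_deformation[where \<rho> = \<rho> and K = 2])
    show "((\<lambda>n. lower_envelope \<phi> (\<eta> n)) \<longlongrightarrow> \<phi> z) sequentially"
    proof (rule tendsto_real_if_eventually_near)
      fix e :: real assume "e > 0"
      show "eventually (\<lambda>n. \<phi> z - e \<le> lower_envelope \<phi> (\<eta> n)) sequentially"
        using \<eta> \<open>e > 0\<close> by (intro eventually_lower_envelope_ge[OF lsc z])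
          (auto intro!: always_eventually less_imp_le)
      show "eventually (\<lambda>n. lower_envelope \<phi> (\<eta> n) \<le> \<phi> z + e) sequentially"
        using upper[OF \<open>e > 0\<close>] by eventually_elim (use \<rho> in \<open>auto simp: less_imp_le\<close>)
    qed
    show "eventually (\<lambda>n. \<forall>p\<in>axis_points (\<eta> n) (\<rho> n). lower_envelope \<phi> p \<le> \<phi> z + e) sequentially"
      if "e > 0" for e
      using upper[OF that] by (rule eventually_mono)
        (use axis_points_subset_cball[OF less_imp_le[OF \<rho>(1)]] in blast)
  qed (use \<eta> \<sigma> \<rho> in auto)
qed

lemma axis_points_scaleR_combination:
  "axis_points ((1 - s) *\<^sub>R z + s *\<^sub>R x) (s * r) = (\<lambda>q. (1 - s) *\<^sub>R z + s *\<^sub>R q) ` axis_points x r"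
  by (simp add: axis_points_def scaleR_conv_of_real algebra_simps)

lemma lower_envelope_le_on_axis_points_along_ray:
  assumes bdd: "bdd_below (\<phi> ` sphere 0 1)" and z: "z \<in> sphere 0 1"
    and r: "0 \<le> r" "cmod x + r < 1" and s: "0 \<le> s" "s \<le> 1"
    and p: "p \<in> axis_points ((1 - s) *\<^sub>R z + s *\<^sub>R x) (s * r)"
  shows "lower_envelope \<phi> p \<le> (1 - s) * \<phi> z + s * Max (lower_envelope \<phi> ` axis_points x r)"
proof -
  obtain q where q: "q \<in> axis_points x r" "p = (1 - s) *\<^sub>R z + s *\<^sub>R q"
    using p unfolding axis_points_scaleR_combination by blast
  have "cmod q \<le> 1" using q(1) axis_points_subset_ball[OF r] by fastforce
  then have "lower_envelope \<phi> p \<le> (1 - s) * \<phi> z + s * lower_envelope \<phi> q"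
    unfolding q(2) using s by (intro lower_envelope_le_along_ray[OF bdd z])
  also have "\<dots> \<le> (1 - s) * \<phi> z + s * Max (lower_envelope \<phi> ` axis_points x r)"
    using q(1) s by (intro add_left_mono mult_left_mono Max_ge finite_imageI imageI)
      (simp_all add: axis_points_def)
  finally show ?thesis .
qed

lemma scaleR_combination_radius_bounds:
  assumes z: "z \<in> sphere 0 1" and r: "0 \<le> r" "cmod x + 2 * r \<le> 1" and s: "0 \<le> s" "s \<le> 1"
  shows "cmod ((1 - s) *\<^sub>R z + s *\<^sub>R x) + s * r \<le> 1 - s * r"
    and "1 - cmod ((1 - s) *\<^sub>R z + s *\<^sub>R x) \<le> 2 * s"
proof -
  have "s * cmod x + s * r \<le> s - s * r"
    using s r mult_left_mono[of "cmod x + 2 * r" 1 s] by (simp add: algebra_simps)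
  then show "cmod ((1 - s) *\<^sub>R z + s *\<^sub>R x) + s * r \<le> 1 - s * r"
    using norm_scaleR_combination_le[OF z s, of x] by linarith
  have "s * cmod (z - x) \<le> s * 2"
    using s r z norm_triangle_ineq4[of z x] by (intro mult_left_mono) auto
  then show "1 - cmod ((1 - s) *\<^sub>R z + s *\<^sub>R x) \<le> 2 * s"
    using one_minus_norm_scaleR_combination_le[OF z s(1), of x] by linarith
qed

lemma eventually_convex_combination_le:
  fixes a B e :: real
  assumes "e > 0"
  shows "eventually (\<lambda>s. (1 - s) * a + s * B \<le> a + e) (at_right 0)"
proof -
  have "((\<lambda>s. (1 - s) * a + s * B) \<longlongrightarrow> a) (at_right 0)"
    by (auto intro!: tendsto_eq_intros)
  from order_tendstoD(2)[OF this, of "a + e"] assms show ?thesis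
    by (auto elim: eventually_mono)
qed

text \<open>Along a radius no upper semicontinuity is needed: convexity of the envelope on the segment
  from \<open>z\<close> bounds it from above.\<close>

lemma tendsto_lower_envelope_radially:
  assumes lsc: "lsc_on (sphere 0 1) \<phi>" and z: "z \<in> sphere 0 1" and x: "x \<in> ball 0 1"
  shows "((\<lambda>s. lower_envelope \<phi> ((1 - s) *\<^sub>R z + s *\<^sub>R x)) \<longlongrightarrow> \<phi> z) (at_right 0)"
proof (rule tendsto_real_if_eventually_near)
  have s01: "eventually (\<lambda>s. 0 < s \<and> s < 1) (at_right (0::real))"
    using eventually_at_right_real[of 0 1] by (auto elim: eventually_mono)
  fix e :: real assume e: "e > 0"
  show "eventually (\<lambda>s. \<phi> z - e \<le> lower_envelope \<phi> ((1 - s) *\<^sub>R z + s *\<^sub>R x)) (at_right 0)"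
    using s01 by (intro eventually_lower_envelope_ge[OF lsc z e])
      (auto intro!: tendsto_eq_intros elim!: eventually_mono dest!: scaleR_combination_in_ball[OF z x])
  show "eventually (\<lambda>s. lower_envelope \<phi> ((1 - s) *\<^sub>R z + s *\<^sub>R x) \<le> \<phi> z + e) (at_right 0)"
    using s01 eventually_convex_combination_le[OF e, of "\<phi> z" "lower_envelope \<phi> x"]
  proof eventually_elim
    case (elim s)
    have "lower_envelope \<phi> ((1 - s) *\<^sub>R z + s *\<^sub>R x) \<le> (1 - s) * \<phi> z + s * lower_envelope \<phi> x"
      using x elim(1) lsc_on_imp_bdd_below[OF compact_sphere lsc]
      by (intro lower_envelope_le_along_ray[OF _ z]) auto
    then show ?case using elim(2) by linarith
  qed
qed

lemma tendsto_deformation_radially: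
  assumes lsc: "lsc_on (sphere 0 1) \<phi>" and z: "z \<in> sphere 0 1" and x: "x \<in> ball 0 1"
    and \<sigma>: "\<And>s. 0 < s \<Longrightarrow> s < 1 \<Longrightarrow> \<sigma> s \<in> support_set \<phi> ((1 - s) *\<^sub>R z + s *\<^sub>R x)"
  shows "((\<lambda>s. deformation ((1 - s) *\<^sub>R z + s *\<^sub>R x) (\<sigma> s)) \<longlongrightarrow> \<i> * z * of_real (\<phi> z)) (at_right 0)"
proof -
  define \<eta> where "\<eta> s = (1 - s) *\<^sub>R z + s *\<^sub>R x" for s
  define r where "r = (1 - cmod x) / 2"
  define M where "M = Max (lower_envelope \<phi> ` axis_points x r)"
  have bdd: "bdd_below (\<phi> ` sphere 0 1)" by (rule lsc_on_imp_bdd_below[OF compact_sphere lsc])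
  have r: "0 < r" "cmod x + r < 1" "cmod x + 2 * r \<le> 1" using x by (auto simp: r_def field_simps)
  have s01: "eventually (\<lambda>s. 0 < s \<and> s < 1) (at_right (0::real))"
    using eventually_at_right_real[of 0 1] by (auto elim: eventually_mono)
  show ?thesis
    unfolding \<eta>_def[symmetric]
  proof (rule tendsto_deformation[where \<rho> = "\<lambda>s. s * r" and K = "2 / r"])
    show "eventually (\<lambda>s. \<forall>p\<in>axis_points (\<eta> s) (s * r). lower_envelope \<phi> p \<le> \<phi> z + e) (at_right 0)"
      if e: "e > 0" for e
      using s01 eventually_convex_combination_le[OF e, of "\<phi> z" M]
    proof eventually_elim
      case (elim s)
      have "lower_envelope \<phi> p \<le> (1 - s) * \<phi> z + s * M" if "p \<in> axis_points (\<eta> s) (s * r)" for p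
        unfolding M_def using that elim(1) r
        by (intro lower_envelope_le_on_axis_points_along_ray[OF bdd z]) (auto simp: \<eta>_def)
      then show ?case using elim(2) by fastforce
    qed
    show "eventually (\<lambda>s. 0 < s * r \<and> cmod (\<eta> s) + s * r < 1 \<and> 1 - cmod (\<eta> s) \<le> 2 / r * (s * r))
      (at_right 0)"
      using s01
    proof eventually_elim
      case (elim s)
      have "0 \<le> s" "s \<le> 1" using elim by auto
      then have b: "cmod (\<eta> s) + s * r \<le> 1 - s * r" "1 - cmod (\<eta> s) \<le> 2 * s"
        unfolding \<eta>_def by (rule scaleR_combination_radius_bounds[OF z less_imp_le[OF r(1)] r(3)])+
      have "0 < s * r" using elim r(1) by simp
      moreover from this b(1) have "cmod (\<eta> s) + s * r < 1" by linarith
      moreover have "2 / r * (s * r) = 2 * s" using r(1) by simp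
      ultimately show ?case using b(2) by simp
    qed
  qed (use tendsto_lower_envelope_radially[OF lsc z x] s01 \<sigma>
      in \<open>auto simp: \<eta>_def elim: eventually_mono intro!: tendsto_eq_intros\<close>)
qed

lemma tangent_field_eq:
  assumes "tangent_field X" "z \<in> sphere 0 1"
  shows "X z = \<i> * z * of_real (phiX X z)"
proof -
  have "X z / (\<i> * z) \<in> \<real>" using assms by (simp add: tangent_field_def)
  then have "of_real (phiX X z) = X z / (\<i> * z)"
    by (simp add: phiX_def complex_is_Real_iff complex_eq_iff)
  moreover have "\<i> * z \<noteq> 0" using assms(2) by auto
  ultimately show ?thesis by (simp add: field_simps)
qed

lemma tangent_field_uminus: "tangent_field X \<Longrightarrow> tangent_field (\<lambda>z. - X z)"
  by (simp add: tangent_field_def)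

lemma continuous_on_phiX:
  assumes "continuous_on (sphere 0 1) X"
  shows "continuous_on (sphere 0 1) (phiX X)"
  unfolding phiX_def[abs_def] by (intro continuous_intros assms) auto

lemma continuous_on_imp_usc_on: "continuous_on S \<phi> \<Longrightarrow> usc_on S \<phi>"
  unfolding usc_on_iff_lsc_on_uminus by (intro continuous_on_imp_lsc_on continuous_on_minus)

lemma E_minus_extends_continuously:
  assumes X: "tangent_field X"
    and lsc: "lsc_on (sphere 0 1) (phiX X)" and usc: "usc_on (sphere 0 1) (phiX X)"
  shows "extends_continuously (E_minus X) X"
  unfolding extends_continuously_def E_minus_eq_deformation
proof (intro ballI allI impI, elim conjE)
  fix z :: complex and \<eta> :: "nat \<Rightarrow> complex"
  assume z: "z \<in> sphere 0 1" and \<eta>: "\<forall>n. \<eta> n \<in> ball 0 1" "\<eta> \<longlonglongrightarrow> z"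
  have "(\<lambda>n. deformation (\<eta> n) (sel_mid (support_set (phiX X) (\<eta> n)))) \<longlonglongrightarrow> \<i> * z * of_real (phiX X z)"
    using \<eta> sel_mid_support_set_mem[OF lsc_on_imp_bdd_below[OF compact_sphere lsc]]
    by (intro tendsto_deformation_sequentially[OF lsc usc z]) auto
  then show "(\<lambda>n. deformation (\<eta> n) (sel_mid (support_set (phiX X) (\<eta> n)))) \<longlonglongrightarrow> X z"
    using tangent_field_eq[OF X z] by simp
qed

lemma E_minus_extends_radially:
  assumes X: "tangent_field X" and lsc: "lsc_on (sphere 0 1) (phiX X)"
  shows "extends_radially (E_minus X) X"
  unfolding extends_radially_def E_minus_eq_deformation
proof (intro ballI)
  fix z x :: complex assume z: "z \<in> sphere 0 1" and x: "x \<in> ball 0 1"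
  have "((\<lambda>s. deformation ((1 - s) *\<^sub>R z + s *\<^sub>R x) (sel_mid (support_set (phiX X) ((1 - s) *\<^sub>R z + s *\<^sub>R x))))
      \<longlongrightarrow> \<i> * z * of_real (phiX X z)) (at_right 0)"
    using scaleR_combination_in_ball[OF z x] sel_mid_support_set_mem[OF lsc_on_imp_bdd_below[OF compact_sphere lsc]]
    by (intro tendsto_deformation_radially[OF lsc z x]) auto
  then show "((\<lambda>s. deformation ((1 - of_real s) * z + of_real s * x)
      (sel_mid (support_set (phiX X) ((1 - of_real s) * z + of_real s * x)))) \<longlongrightarrow> X z) (at_right 0)"
    using tangent_field_eq[OF X z] by (simp add: scaleR_conv_of_real)
qed

lemma extends_continuously_uminus:
  assumes "\<And>\<xi>. \<xi> \<in> ball 0 1 \<Longrightarrow> F \<xi> = - G \<xi>" "extends_continuously G (\<lambda>z. - X z)"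
  shows "extends_continuously F X"
  unfolding extends_continuously_def
proof (intro ballI allI impI)
  fix z :: complex and \<eta> :: "nat \<Rightarrow> complex"
  assume z: "z \<in> sphere 0 1" and \<eta>: "(\<forall>n. \<eta> n \<in> ball 0 1) \<and> \<eta> \<longlonglongrightarrow> z"
  then have "(\<lambda>n. G (\<eta> n)) \<longlonglongrightarrow> - X z"
    using assms(2) unfolding extends_continuously_def by blast
  from tendsto_minus[OF this] have "(\<lambda>n. - G (\<eta> n)) \<longlonglongrightarrow> X z"
    by simp
  then show "(\<lambda>n. F (\<eta> n)) \<longlonglongrightarrow> X z" using \<eta> assms(1) by simp
qed

lemma extends_radially_uminus:
  assumes "\<And>\<xi>. \<xi> \<in> ball 0 1 \<Longrightarrow> F \<xi> = - G \<xi>" "extends_radially G (\<lambda>z. - X z)"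
  shows "extends_radially F X"
  unfolding extends_radially_def
proof (intro ballI)
  fix z x :: complex assume z: "z \<in> sphere 0 1" and x: "x \<in> ball 0 1"
  define \<eta> where "\<eta> s = (1 - of_real s) * z + of_real s * x" for s :: real
  have "((\<lambda>s. G (\<eta> s)) \<longlongrightarrow> - X z) (at_right 0)"
    using assms(2) z x unfolding extends_radially_def \<eta>_def by blast
  from tendsto_minus[OF this] have "((\<lambda>s. - G (\<eta> s)) \<longlongrightarrow> X z) (at_right 0)"
    by simp
  moreover have "eventually (\<lambda>s. - G (\<eta> s) = F (\<eta> s)) (at_right 0)"
    using eventually_at_right_real[OF zero_less_one]
  proof (rule eventually_mono)
    fix s :: real assume "s \<in> {0<..<1}"
    then have "\<eta> s \<in> ball 0 1"
      using scaleR_combination_in_ball[OF z x, of s] by (simp add: \<eta>_def scaleR_conv_of_real)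
    then show "- G (\<eta> s) = F (\<eta> s)" using assms(1) by simp
  qed
  ultimately show "((\<lambda>s. F ((1 - of_real s) * z + of_real s * x)) \<longlongrightarrow> X z) (at_right 0)"
    unfolding \<eta>_def[symmetric] by (rule Lim_transform_eventually)
qed

lemma E_plus_eq_uminus_E_minus_on_ball:
  assumes "usc_on (sphere 0 1) (phiX X)" "\<xi> \<in> ball 0 1"
  shows "E_plus X \<xi> = - E_minus (\<lambda>z. - X z) \<xi>"
proof -
  have "lsc_on (sphere 0 1) (phiX (\<lambda>z. - X z))"
    using assms(1) by (simp add: phiX_uminus usc_on_iff_lsc_on_uminus)
  then show ?thesis
    using assms(2) by (intro E_plus_eq_uminus_E_minus lsc_on_imp_bdd_below[OF compact_sphere])
qed

lemma E_plus_extends_continuously: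
  assumes "tangent_field X" "lsc_on (sphere 0 1) (phiX X)" "usc_on (sphere 0 1) (phiX X)"
  shows "extends_continuously (E_plus X) X"
proof (rule extends_continuously_uminus[OF E_plus_eq_uminus_E_minus_on_ball[OF assms(3)]])
  show "extends_continuously (E_minus (\<lambda>z. - X z)) (\<lambda>z. - X z)"
    using assms by (intro E_minus_extends_continuously)
      (simp_all add: tangent_field_uminus phiX_uminus usc_on_iff_lsc_on_uminus)
qed

lemma E_plus_extends_radially:
  assumes "tangent_field X" "usc_on (sphere 0 1) (phiX X)"
  shows "extends_radially (E_plus X) X"
proof (rule extends_radially_uminus[OF E_plus_eq_uminus_E_minus_on_ball[OF assms(2)]])
  show "extends_radially (E_minus (\<lambda>z. - X z)) (\<lambda>z. - X z)"
    using assms by (intro E_minus_extends_radially)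
      (simp_all add: tangent_field_uminus phiX_uminus usc_on_iff_lsc_on_uminus)
qed

theorem proposition1p5:
  fixes X :: "complex \<Rightarrow> complex"
  assumes "tangent_field X"
  shows "(continuous_on (sphere 0 1) X \<longrightarrow>
            extends_continuously (E_plus X) X \<and> extends_continuously (E_minus X) X)
       \<and> (lsc_on (sphere 0 1) (phiX X) \<longrightarrow> extends_radially (E_minus X) X)
       \<and> (usc_on (sphere 0 1) (phiX X) \<longrightarrow> extends_radially (E_plus X) X)"
proof (intro conjI impI)
  assume "continuous_on (sphere 0 1) X"
  then have "continuous_on (sphere 0 1) (phiX X)" by (rule continuous_on_phiX)
  then have "lsc_on (sphere 0 1) (phiX X)" "usc_on (sphere 0 1) (phiX X)"
    by (rule continuous_on_imp_lsc_on, rule continuous_on_imp_usc_on)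
  with assms show "extends_continuously (E_plus X) X" "extends_continuously (E_minus X) X"
    by (rule E_plus_extends_continuously, rule E_minus_extends_continuously)
next
  assume "lsc_on (sphere 0 1) (phiX X)"
  with assms show "extends_radially (E_minus X) X" by (rule E_minus_extends_radially)
next
  assume "usc_on (sphere 0 1) (phiX X)"
  with assms show "extends_radially (E_plus X) X" by (rule E_plus_extends_radially)
qed

end
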